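(* Consider Problem (P) under Assumptions A1–A6 and B1–B2, with surrogates $\widetilde f_i$ satisfying F1–F3. Let $\{\mathbf{x}[n]\}_n=\{(\mathbf{x}_i[n])_{i=1}^I\}_n$ be generated by the exact NEXT algorithm (Algorithm 1, i.e. the iteration below with $\mathbf{x}_i^{\rm inx}[n]=\widetilde{\mathbf{x}}_i[n]$), and let $\overline{\mathbf{x}}[n]=\frac1I\sum_{i=1}^I\mathbf{x}_i[n]$. Suppose the step-sizes satisfy $\alpha[n]\in(0,1]$ for all $n$, $\sum_{n=0}^\infty\alpha[n]=\infty$ and $\sum_{n=0}^\infty\alpha[n]^2<\infty$. Then: (a) the sequence $\{\overline{\mathbf{x}}[n]\}_n$ is bounded and every limit point of it is a stationary solution of (P); (b) $\|\mathbf{x}_i[n]-\overline{\mathbf{x}}[n]\|\to0$ as $n\to\infty$ for every $i=1,\dots,I$.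
   Context: Problem (P): minimize $U(\mathbf{x})=F(\mathbf{x})+G(\mathbf{x})$ subject to $\mathbf{x}\in\mathcal K\subseteq\mathbb R^m$, where $F=\sum_{i=1}^I f_i$. Assumptions: (A1) $\mathcal K$ nonempty, closed, convex; (A2) each $f_i:\mathbb R^m\to\mathbb R$ is $C^1$ (possibly nonconvex) on an open set containing $\mathcal K$; (A3) each $\nabla f_i$ is Lipschitz on $\mathcal K$ with constant $L_i$; (A4) $\|\nabla F(\mathbf{x})\|\le L_F$ on $\mathcal K$ for some finite $L_F$; (A5) $G$ is convex (possibly nonsmooth) with all subgradients on $\mathcal K$ bounded in norm by some finite $L_G$; (A6) $U$ is coercive on $\mathcal K$. A point $\mathbf{x}^*\in\mathcal K$ is a stationary solution of (P) if there is a subgradient $\boldsymbol\xi\in\partial G(\mathbf{x}^* )$ with $(\nabla F(\mathbf{x}^* )+\boldsymbol\xi)^T(\mathbf{y}-\mathbf{x}^* )\ge0$ for all $\mathbf{y}\in\mathcal K$. Network: at each time $n$ a digraph $\mathcal G[n]=(\{1,\dots,I\},\mathcal E[n])$; $\mathcal N_i^{\rm in}[n]=\{j:(j,i)\in\mathcal E[n]\}\cup\{i\}$. Weights: $w_{ij}[n]=\theta_{ij}\in[\vartheta,1]$ if $j\in\mathcal N_i^{\rm in}[n]$ and $w_{ij}[n]=0$ otherwise, for a fixed $\vartheta\in(0,1)$; $\mathbf W[n]=(w_{ij}[n])$. (B1) there is an integer $B>0$ such that for every $k\ge0$ the graph with edge set $\bigcup_{n=kB}^{(k+1)B-1}\mathcal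 E[n]$ is strongly connected; (B2) $\mathbf W[n]\mathbf 1=\mathbf 1$ and $\mathbf 1^T\mathbf W[n]=\mathbf 1^T$ for all $n$. Surrogates $\widetilde f_i(\cdot;\mathbf{x}):\mathcal K\to\mathbb R$ (differentiable in the first argument) satisfy: (F1) $\widetilde f_i(\cdot;\mathbf{x})$ is strongly convex on $\mathcal K$ with constant $\tau_i>0$ uniformly in $\mathbf{x}\in\mathcal K$; (F2) $\nabla\widetilde f_i(\mathbf{x};\mathbf{x})=\nabla f_i(\mathbf{x})$ for all $\mathbf{x}\in\mathcal K$ (gradient w.r.t. the first argument); (F3) $\nabla\widetilde f_i(\mathbf{x};\cdot)$ is Lipschitz on $\mathcal K$ uniformly in $\mathbf{x}\in\mathcal K$. NEXT iteration (inexact version; the exact version has $\varepsilon_i[n]=0$): initialize $\mathbf{x}_i[0]\in\mathcal K$, $\mathbf y_i[0]=\nabla f_i(\mathbf{x}_i[0])$, $\widetilde{\boldsymbol\pi}_i[0]=I\mathbf y_i[0]-\nabla f_i(\mathbf{x}_i[0])$. For $n\ge0$ each agent $i$: computes $\widetilde{\mathbf{x}}_i[n]=\arg\min_{\mathbf{x}\in\mathcal K}\{\widetilde f_i(\mathbf{x};\mathbf{x}_i[n])+\widetilde{\boldsymbol\pi}_i[n]^T(\mathbf{x}-\mathbf{x}_i[n])+G(\mathbf{x})\}$; picks $\mathbf{x}_i^{\rm inx}[n]\in\mathcal K$ with $\|\mathbf{x}_i^{\rm inx}[n]-\widetilde{\mathbf{x}}_i[n]\|\le\varepsilon_i[n]$;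 sets $\mathbf z_i[n]=\mathbf{x}_i[n]+\alpha[n](\mathbf{x}_i^{\rm inx}[n]-\mathbf{x}_i[n])$; then $\mathbf{x}_i[n+1]=\sum_{j=1}^I w_{ij}[n]\mathbf z_j[n]$, $\mathbf y_i[n+1]=\sum_{j=1}^I w_{ij}[n]\mathbf y_j[n]+\nabla f_i(\mathbf{x}_i[n+1])-\nabla f_i(\mathbf{x}_i[n])$, $\widetilde{\boldsymbol\pi}_i[n+1]=I\mathbf y_i[n+1]-\nabla f_i(\mathbf{x}_i[n+1])$. *)

theory Defs
  imports "HOL-Analysis.Analysis"
begin

definition subdiff :: "('a::euclidean_space \<Rightarrow> real) \<Rightarrow> 'a \<Rightarrow> 'a set" where
  "subdiff G x = {\<xi>. \<forall>y. G y \<ge> G x + \<xi> \<bullet> (y - x)}"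

definition strongly_convex_on :: "'a::euclidean_space set \<Rightarrow> real \<Rightarrow> ('a \<Rightarrow> real) \<Rightarrow> bool" where
  "strongly_convex_on S \<tau> h \<longleftrightarrow>
     (\<forall>x\<in>S. \<forall>z\<in>S. \<forall>t::real. 0 \<le> t \<and> t \<le> 1 \<longrightarrow>
        h (t *\<^sub>R x + (1 - t) *\<^sub>R z) \<le> t * h x + (1 - t) * h z - \<tau> / 2 * t * (1 - t) * (norm (x - z))\<^sup>2)"

definition coercive_on :: "'a::euclidean_space set \<Rightarrow> ('a \<Rightarrow> real) \<Rightarrow> bool" where
  "coercive_on K U \<longleftrightarrow> (\<forall>M. \<exists>R. \<forall>x\<in>K. norm x \<ge> R \<longrightarrow> U x \<ge> M)"

definition stationary :: "'a::euclidean_space set \<Rightarrow> ('a \<Rightarrow> 'a) \<Rightarrow> ('a \<Rightarrow> real) \<Rightarrow> 'a \<Rightarrow> bool" where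
  "stationary K gradF G xs \<longleftrightarrow> xs \<in> K \<and>
     (\<exists>\<xi>\<in>subdiff G xs. \<forall>y\<in>K. (gradF xs + \<xi>) \<bullet> (y - xs) \<ge> 0)"

definition in_nbrs :: "(nat \<Rightarrow> (nat \<times> nat) set) \<Rightarrow> nat \<Rightarrow> nat \<Rightarrow> nat set" where
  "in_nbrs E n i = {j. (j, i) \<in> E n} \<union> {i}"

definition weight :: "(nat \<Rightarrow> (nat \<times> nat) set) \<Rightarrow> (nat \<Rightarrow> nat \<Rightarrow> real) \<Rightarrow> nat \<Rightarrow> nat \<Rightarrow> nat \<Rightarrow> real" where
  "weight E \<theta> n i j = (if j \<in> in_nbrs E n i then \<theta> i j else 0)"

definition strongly_connected_dg :: "nat set \<Rightarrow> (nat \<times> nat) set \<Rightarrow> bool" where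
  "strongly_connected_dg V Ed \<longleftrightarrow> (\<forall>i\<in>V. \<forall>j\<in>V. (i, j) \<in> (Ed \<inter> (V \<times> V))\<^sup>*)"

end

theory Submission
  imports Defs
begin

text \<open>
  The averages \<open>xbar[n]\<close> follow a perturbed descent of the merit function
  \<open>\<Phi>[n] = F(xbar[n]) + (1/I) \<Sum>\<^sub>i G(x\<^sub>i[n])\<close>, which dominates \<open>U(xbar[n])\<close>; the
  perturbations are controlled by the spreads (maximal pairwise distances) of the local copies
  \<open>x\<^sub>i\<close> and of the gradient trackers \<open>y\<^sub>i\<close>. Over every window of \<open>I B\<close> steps the doubly
  stochastic mixing, whose nonzero weights are at least \<open>\<theta>\<^sub>0\<close>, shrinks the spread of a
  perturbed consensus sequence by the factor \<open>1 - \<theta>\<^sub>0^(I B)\<close>; since \<open>\<Sum> \<alpha>\<^sup>2 < \<infinity>\<close> the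
  spreads are square summable, which gives (b), makes the descent errors summable, and with
  coercivity bounds the averages. The descent also gives
  \<open>\<Sum> \<alpha>[n] \<parallel>xt\<^sub>i[n] - x\<^sub>i[n]\<parallel>\<^sup>2 < \<infinity>\<close>. Finally, the best response of one agent to the exact
  gradient of the others is a Lipschitz map whose fixed points are stationary; its residual at
  \<open>xbar[n]\<close> has increments \<open>O(\<alpha>[n])\<close> and an \<open>\<alpha>\<close>-summable square, hence tends to zero
  because \<open>\<Sum> \<alpha> = \<infinity>\<close>.
\<close>

section \<open>Strong convexity and first-order optimality\<close>

lemma eventually_at_right_0_less_1: "eventually (\<lambda>t::real. 0 < t \<and> t < 1) (at_right 0)"
  unfolding eventually_at_right_field by (rule exI[of _ 1]) auto

lemma directional_quotient_tendsto:
  fixes f :: "'a::euclidean_space \<Rightarrow> real"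
  assumes der: "(f has_derivative (\<lambda>h. g \<bullet> h)) (at x within K)"
    and K: "convex K" "x \<in> K" "w \<in> K"
  shows "((\<lambda>t. (f (x + t *\<^sub>R (w - x)) - f x) / t) \<longlongrightarrow> g \<bullet> (w - x)) (at_right 0)"
proof -
  define p where "p t = x + t *\<^sub>R (w - x)" for t :: real
  have pK: "p ` {0..1} \<subseteq> K"
  proof
    fix y assume "y \<in> p ` {0..1}"
    then obtain t where t: "t \<in> {0..1}" "y = p t" by auto
    have "p t = (1 - t) *\<^sub>R x + t *\<^sub>R w" by (simp add: p_def algebra_simps)
    then show "y \<in> K" using t K convexD[OF K(1) K(2) K(3), of "1-t" t] by auto
  qed
  have dp: "(p has_derivative (\<lambda>s. s *\<^sub>R (w - x))) (at 0 within {0..1})"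
    unfolding p_def by (auto intro!: derivative_eq_intros)
  have df: "(f has_derivative (\<lambda>h. g \<bullet> h)) (at (p 0) within p ` {0..1})"
    using has_derivative_subset[OF der pK] by (simp add: p_def)
  have "((f \<circ> p) has_derivative ((\<lambda>h. g \<bullet> h) \<circ> (\<lambda>s. s *\<^sub>R (w - x)))) (at 0 within {0..1})"
    by (rule diff_chain_within[OF dp df])
  moreover have "((\<lambda>h. g \<bullet> h) \<circ> (\<lambda>s. s *\<^sub>R (w - x))) = (*) (g \<bullet> (w - x))"
    by (auto simp: fun_eq_iff)
  ultimately have "((f \<circ> p) has_field_derivative (g \<bullet> (w - x))) (at 0 within {0..1})"
    by (simp add: has_field_derivative_def)
  then have "((\<lambda>y. ((f \<circ> p) y - (f \<circ> p) 0) / (y - 0)) \<longlongrightarrow> g \<bullet> (w - x)) (at 0 within {0..1})"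
    by (simp add: has_field_derivative_iff)
  moreover have "at (0::real) within {0..1} = at_right 0" by (rule at_within_Icc_at_right) simp
  ultimately show ?thesis by (simp add: p_def)
qed

lemma strongly_convex_on_gradient_ineq:
  fixes f :: "'a::euclidean_space \<Rightarrow> real"
  assumes sc: "strongly_convex_on K \<tau> f"
    and der: "(f has_derivative (\<lambda>h. g \<bullet> h)) (at x within K)"
    and K: "convex K" "x \<in> K" "w \<in> K"
  shows "f w \<ge> f x + g \<bullet> (w - x) + \<tau> / 2 * (norm (w - x))\<^sup>2"
proof -
  let ?d = "(norm (w - x))\<^sup>2"
  have lim1: "((\<lambda>t. (f (x + t *\<^sub>R (w - x)) - f x) / t) \<longlongrightarrow> g \<bullet> (w - x)) (at_right 0)"
    by (rule directional_quotient_tendsto[OF der K])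
  have lim2: "((\<lambda>t. f w - f x - \<tau> / 2 * (1 - t) * ?d) \<longlongrightarrow> f w - f x - \<tau> / 2 * (1 - 0) * ?d) (at_right 0)"
    by (intro tendsto_intros)
  have "eventually (\<lambda>t. (f (x + t *\<^sub>R (w - x)) - f x) / t \<le> f w - f x - \<tau> / 2 * (1 - t) * ?d) (at_right 0)"
    using eventually_at_right_0_less_1
  proof (rule eventually_mono)
    fix t :: real assume t: "0 < t \<and> t < 1"
    have "f (t *\<^sub>R w + (1 - t) *\<^sub>R x) \<le> t * f w + (1 - t) * f x - \<tau> / 2 * t * (1 - t) * ?d"
      using sc K t unfolding strongly_convex_on_def by auto
    moreover have "t *\<^sub>R w + (1 - t) *\<^sub>R x = x + t *\<^sub>R (w - x)" by (simp add: algebra_simps)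
    ultimately have "f (x + t *\<^sub>R (w - x)) - f x \<le> t * (f w - f x - \<tau> / 2 * (1 - t) * ?d)"
      by (simp add: algebra_simps)
    then show "(f (x + t *\<^sub>R (w - x)) - f x) / t \<le> f w - f x - \<tau> / 2 * (1 - t) * ?d"
      using t by (simp add: divide_le_eq mult.commute)
  qed
  then have "g \<bullet> (w - x) \<le> f w - f x - \<tau> / 2 * (1 - 0) * ?d"
    by (rule tendsto_le[OF _ lim2 lim1, rotated]) simp
  then show ?thesis by simp
qed

lemma strongly_convex_on_add_affine_convex:
  fixes f G :: "'a::euclidean_space \<Rightarrow> real"
  assumes sc: "strongly_convex_on K \<tau> f" and G: "convex_on UNIV G"
  shows "strongly_convex_on K \<tau> (\<lambda>w. f w + p \<bullet> (w - q) + G w)"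
  unfolding strongly_convex_on_def
proof (intro ballI allI impI)
  fix a b and t :: real assume ab: "a \<in> K" "b \<in> K" and t: "0 \<le> t \<and> t \<le> 1"
  have "f (t *\<^sub>R a + (1 - t) *\<^sub>R b) \<le> t * f a + (1 - t) * f b - \<tau> / 2 * t * (1 - t) * (norm (a - b))\<^sup>2"
    using sc ab t unfolding strongly_convex_on_def by auto
  moreover have "G (t *\<^sub>R a + (1 - t) *\<^sub>R b) \<le> t * G a + (1 - t) * G b"
    using convex_onD[OF G, of t b a] t by (auto simp: add.commute)
  moreover have "p \<bullet> (t *\<^sub>R a + (1 - t) *\<^sub>R b - q) = t * (p \<bullet> (a - q)) + (1 - t) * (p \<bullet> (b - q))"
    by (simp add: algebra_simps inner_diff_right)
  ultimately show "f (t *\<^sub>R a + (1 - t) *\<^sub>R b) + p \<bullet> (t *\<^sub>R a + (1 - t) *\<^sub>R b - q) + G (t *\<^sub>R a + (1 - t) *\<^sub>R b)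
        \<le> t * (f a + p \<bullet> (a - q) + G a) + (1 - t) * (f b + p \<bullet> (b - q) + G b) - \<tau> / 2 * t * (1 - t) * (norm (a - b))\<^sup>2"
    by (simp add: algebra_simps)
qed

lemma strongly_convex_on_minimizer_growth:
  fixes \<phi> :: "'a::euclidean_space \<Rightarrow> real"
  assumes sc: "strongly_convex_on K \<tau> \<phi>" and cK: "convex K" and u: "u \<in> K" and w: "w \<in> K"
    and opt: "\<forall>v\<in>K. \<phi> u \<le> \<phi> v"
  shows "\<phi> w - \<phi> u \<ge> \<tau> / 2 * (norm (w - u))\<^sup>2"
proof -
  let ?d = "(norm (w - u))\<^sup>2"
  have lim: "((\<lambda>t. \<tau> / 2 * (1 - t) * ?d) \<longlongrightarrow> \<tau> / 2 * (1 - 0) * ?d) (at_right 0)"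
    by (intro tendsto_intros)
  have ev: "eventually (\<lambda>t. \<tau> / 2 * (1 - t) * ?d \<le> \<phi> w - \<phi> u) (at_right 0)"
    using eventually_at_right_0_less_1
  proof (rule eventually_mono)
    fix t :: real assume t: "0 < t \<and> t < 1"
    have "\<phi> (t *\<^sub>R w + (1 - t) *\<^sub>R u) \<le> t * \<phi> w + (1 - t) * \<phi> u - \<tau> / 2 * t * (1 - t) * ?d"
      using sc u w t unfolding strongly_convex_on_def by auto
    moreover have "t *\<^sub>R w + (1 - t) *\<^sub>R u \<in> K"
      using convexD[OF cK u w, of "1-t" t] t by (simp add: add.commute)
    ultimately have "t * (\<tau> / 2 * (1 - t) * ?d) \<le> t * (\<phi> w - \<phi> u)"
      using opt by (force simp: algebra_simps)
    then show "\<tau> / 2 * (1 - t) * ?d \<le> \<phi> w - \<phi> u" using t by simp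
  qed
  show ?thesis using tendsto_upperbound[OF lim ev] by simp
qed

lemma linearized_optimality_at_minimizer:
  fixes h G :: "'a::euclidean_space \<Rightarrow> real"
  assumes der: "(h has_derivative (\<lambda>v. gh \<bullet> v)) (at x0 within K)"
    and K: "convex K" "x0 \<in> K" and G: "convex_on UNIV G"
    and opt: "\<forall>w\<in>K. h x0 + G x0 \<le> h w + G w"
  shows "\<forall>w\<in>K. G x0 \<le> G w + gh \<bullet> (w - x0)"
proof
  fix w assume w: "w \<in> K"
  let ?q = "\<lambda>t. (h (x0 + t *\<^sub>R (w - x0)) - h x0) / t + (G w - G x0)"
  have lim: "(?q \<longlongrightarrow> gh \<bullet> (w - x0) + (G w - G x0)) (at_right 0)"
    by (intro tendsto_intros directional_quotient_tendsto[OF der K w])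
  have "eventually (\<lambda>t. 0 \<le> ?q t) (at_right 0)"
    using eventually_at_right_0_less_1
  proof (rule eventually_mono)
    fix t :: real assume t: "0 < t \<and> t < 1"
    have eq: "x0 + t *\<^sub>R (w - x0) = (1 - t) *\<^sub>R x0 + t *\<^sub>R w" by (simp add: algebra_simps)
    have "x0 + t *\<^sub>R (w - x0) \<in> K" unfolding eq using convexD[OF K(1) K(2) w, of "1-t" t] t by simp
    then have "h x0 + G x0 \<le> h (x0 + t *\<^sub>R (w - x0)) + G (x0 + t *\<^sub>R (w - x0))" using opt by blast
    moreover have "G (x0 + t *\<^sub>R (w - x0)) \<le> (1 - t) * G x0 + t * G w"
      unfolding eq using convex_onD[OF G, of t x0 w] t by simp
    ultimately have "0 \<le> (h (x0 + t *\<^sub>R (w - x0)) - h x0 + t * (G w - G x0)) / t"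
      using t by (simp add: algebra_simps)
    also have "\<dots> = ?q t" using t by (simp add: field_simps)
    finally show "0 \<le> ?q t" .
  qed
  then have "0 \<le> gh \<bullet> (w - x0) + (G w - G x0)" by (rule tendsto_lowerbound[OF lim]) simp
  then show "G x0 \<le> G w + gh \<bullet> (w - x0)" by simp
qed

lemma onorm_inner_le: "onorm (\<lambda>h. (c::'a::euclidean_space) \<bullet> h) \<le> norm c"
proof (rule onorm_le)
  fix x show "norm (c \<bullet> x) \<le> norm c * norm x" using Cauchy_Schwarz_ineq2[of c x] by simp
qed

lemma quadratic_growth_attains_min:
  fixes \<phi> :: "'a::euclidean_space \<Rightarrow> real"
  assumes K: "closed K" and w0: "w0 \<in> K" and \<tau>: "\<tau> > 0" and cont: "continuous_on K \<phi>"
    and grow: "\<And>w. w \<in> K \<Longrightarrow> \<phi> w \<ge> \<phi> w0 + g \<bullet> (w - w0) + \<tau> / 2 * (norm (w - w0))\<^sup>2"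
  shows "\<exists>u\<in>K. \<forall>w\<in>K. \<phi> u \<le> \<phi> w"
proof -
  define R0 where "R0 = 2 * norm g / \<tau>"
  have R0: "R0 \<ge> 0" unfolding R0_def using \<tau> by simp
  have far: "\<phi> w > \<phi> w0" if w: "w \<in> K" and f: "norm (w - w0) > R0" for w
  proof -
    let ?d = "norm (w - w0)"
    have "g \<bullet> (w - w0) \<ge> - (norm g * ?d)" using Cauchy_Schwarz_ineq2[of g "w - w0"] by simp
    moreover have "\<tau> / 2 * ?d > norm g" using f \<tau> unfolding R0_def by (simp add: field_simps)
    then have "\<tau> / 2 * ?d * ?d > norm g * ?d" using f R0 by (intro mult_strict_right_mono) auto
    ultimately show ?thesis using grow[OF w] by (simp add: power2_eq_square mult.assoc)
  qed
  define T where "T = K \<inter> cball w0 R0"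
  have "compact T" unfolding T_def using K by (simp add: closed_Int_compact)
  moreover have "w0 \<in> T" unfolding T_def using w0 R0 by simp
  moreover have "continuous_on T \<phi>" using cont unfolding T_def by (rule continuous_on_subset) auto
  ultimately obtain u where u: "u \<in> T" "\<forall>w\<in>T. \<phi> u \<le> \<phi> w"
    using continuous_attains_inf[of T \<phi>] by blast
  have "\<phi> u \<le> \<phi> w" if w: "w \<in> K" for w
  proof (cases "norm (w - w0) \<le> R0")
    case True
    then have "w \<in> T" unfolding T_def using w by (simp add: dist_norm norm_minus_commute)
    then show ?thesis using u by blast
  next
    case False
    then show ?thesis using u \<open>w0 \<in> T\<close> far[OF w] by fastforce
  qed
  moreover have "u \<in> K" using u unfolding T_def by blast
  ultimately show ?thesis by blast
qed

lemma uniform_lipschitz_bound: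
  assumes "finite A" and "\<forall>i\<in>A. \<exists>L. \<forall>u\<in>U. L-lipschitz_on K (g i u)"
  shows "\<exists>L. \<forall>i\<in>A. \<forall>u\<in>U. L-lipschitz_on K (g i u)"
proof -
  obtain L where L: "\<forall>i\<in>A. \<forall>u\<in>U. (L i)-lipschitz_on K (g i u)" using bchoice[OF assms(2)] by blast
  have "L i \<le> (\<Sum>j\<in>A. \<bar>L j\<bar>)" if "i \<in> A" for i
    using that assms(1) member_le_sum[of i A "\<lambda>j. \<bar>L j\<bar>"] by fastforce
  then show ?thesis using L lipschitz_on_le by blast
qed

lemma convex_strict_epigraph_shift:
  fixes G :: "'a::euclidean_space \<Rightarrow> real"
  assumes G: "convex_on UNIV G"
  shows "convex {(d, r). G (x0 + d) - G x0 < r}"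
  unfolding convex_def
proof (clarsimp)
  fix d1 r1 d2 r2 and u v :: real
  assume h1: "G (x0 + d1) - G x0 < r1" and h2: "G (x0 + d2) - G x0 < r2"
    and uv: "0 \<le> u" "0 \<le> v" "u + v = 1"
  have eq: "x0 + (u *\<^sub>R d1 + v *\<^sub>R d2) = (1 - v) *\<^sub>R (x0 + d1) + v *\<^sub>R (x0 + d2)"
    using uv by (simp add: algebra_simps flip: scaleR_add_left)
  have "G (x0 + (u *\<^sub>R d1 + v *\<^sub>R d2)) \<le> (1 - v) * G (x0 + d1) + v * G (x0 + d2)"
    unfolding eq using convex_onD[OF G, of v "x0 + d1" "x0 + d2"] uv by auto
  also have "\<dots> = u * G (x0 + d1) + v * G (x0 + d2)" using uv by simp
  finally have "G (x0 + (u *\<^sub>R d1 + v *\<^sub>R d2)) \<le> u * G (x0 + d1) + v * G (x0 + d2)" .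
  moreover have "u * (G (x0 + d1) - G x0) + v * (G (x0 + d2) - G x0) < u * r1 + v * r2"
  proof (cases "u = 0")
    case True then show ?thesis using uv h2 by simp
  next
    case False
    then have "u * (G (x0 + d1) - G x0) < u * r1" using h1 uv by simp
    moreover have "v * (G (x0 + d2) - G x0) \<le> v * r2" using h2 uv by (simp add: mult_left_mono)
    ultimately show ?thesis by simp
  qed
  moreover have "u * G x0 + v * G x0 = G x0" using uv by (metis distrib_right mult_1)
  ultimately show "G (x0 + (u *\<^sub>R d1 + v *\<^sub>R d2)) - G x0 < u * r1 + v * r2"
    by (simp add: algebra_simps)
qed

lemma convex_feasible_hypograph:
  fixes g :: "'a::euclidean_space"
  assumes K: "convex K"
  shows "convex {(d, r). x0 + d \<in> K \<and> r \<le> - (g \<bullet> d)}"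
  unfolding convex_def
proof (clarsimp, intro conjI)
  fix d1 r1 d2 r2 and u v :: real
  assume h1: "x0 + d1 \<in> K" "r1 \<le> - (g \<bullet> d1)" and h2: "x0 + d2 \<in> K" "r2 \<le> - (g \<bullet> d2)"
    and uv: "0 \<le> u" "0 \<le> v" "u + v = 1"
  have eq: "x0 + (u *\<^sub>R d1 + v *\<^sub>R d2) = u *\<^sub>R (x0 + d1) + v *\<^sub>R (x0 + d2)"
    using uv by (simp add: algebra_simps flip: scaleR_add_left)
  show "x0 + (u *\<^sub>R d1 + v *\<^sub>R d2) \<in> K"
    unfolding eq using K h1(1) h2(1) uv unfolding convex_def by blast
next
  fix d1 r1 d2 r2 and u v :: real
  assume h1: "r1 \<le> - (g \<bullet> d1)" and h2: "r2 \<le> - (g \<bullet> d2)" and uv: "0 \<le> u" "0 \<le> v"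
  have "u * r1 \<le> u * (- (g \<bullet> d1))" "v * r2 \<le> v * (- (g \<bullet> d2))"
    using mult_left_mono[OF h1 uv(1)] mult_left_mono[OF h2 uv(2)] by simp_all
  then show "u * r1 + v * r2 \<le> - (g \<bullet> (u *\<^sub>R d1 + v *\<^sub>R d2))"
    by (simp add: inner_add_right)
qed

text \<open>A hyperplane \<open>a\<^sub>1 \<bullet> d + a\<^sub>2 r = b\<close> separating the strict epigraph of \<open>G(x\<^sub>0 + \<cdot>) - G x\<^sub>0\<close>
  from the hypograph of \<open>-g\<close> over \<open>K - x\<^sub>0\<close> is non-vertical, and \<open>a\<^sub>1 / (-a\<^sub>2)\<close> is the
  subgradient sought.\<close>

lemma subgradient_of_separating_hyperplane:
  fixes G :: "'a::euclidean_space \<Rightarrow> real"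
  assumes S: "\<And>d r. G (x0 + d) - G x0 < r \<Longrightarrow> a1 \<bullet> d + a2 * r \<le> b"
    and T: "\<And>d r. x0 + d \<in> K \<Longrightarrow> r \<le> - (g \<bullet> d) \<Longrightarrow> b \<le> a1 \<bullet> d + a2 * r"
    and x0: "x0 \<in> K" and a: "(a1, a2) \<noteq> 0"
  shows "\<exists>\<xi>\<in>subdiff G x0. \<forall>w\<in>K. (g + \<xi>) \<bullet> (w - x0) \<ge> 0"
proof -
  have b0: "b \<le> 0" using T[of 0 0] x0 by simp
  have "a2 \<le> 0" using S[of 0 1] b0 by simp
  moreover have "a2 \<noteq> 0"
  proof
    assume "a2 = 0"
    then have "a1 \<bullet> a1 \<le> b" using S[of a1 "G (x0 + a1) - G x0 + 1"] by simp
    then have "a1 = 0" using b0 by (metis inner_ge_zero inner_eq_zero_iff order.trans antisym)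
    then show False using \<open>a2 = 0\<close> a by (simp add: zero_prod_def)
  qed
  ultimately have c: "- a2 > 0" by simp
  have "b \<ge> 0"
  proof (rule ccontr)
    assume "\<not> b \<ge> 0"
    then have "b < 0" by simp
    moreover have "a2 * (b / (2 * a2)) \<le> b" using S[of 0 "b / (2 * a2)"] \<open>b < 0\<close> c
      by (simp add: zero_less_divide_iff)
    ultimately show False using c by simp
  qed
  define \<xi> where "\<xi> = (1 / - a2) *\<^sub>R a1"
  have "\<xi> \<in> subdiff G x0" unfolding subdiff_def
  proof (intro CollectI allI)
    fix y
    have "G x0 + \<xi> \<bullet> (y - x0) \<le> G y + e" if e: "e > 0" for e
    proof -
      have "a1 \<bullet> (y - x0) + a2 * (G (x0 + (y - x0)) - G x0 + e) \<le> b"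
        by (rule S) (use e in simp)
      then have "(1 / - a2) * (a1 \<bullet> (y - x0)) \<le> G y - G x0 + e" using b0 c by (simp add: field_simps)
      then show ?thesis by (simp add: \<xi>_def)
    qed
    then show "G y \<ge> G x0 + \<xi> \<bullet> (y - x0)" by (rule field_le_epsilon)
  qed
  moreover have "(g + \<xi>) \<bullet> (w - x0) \<ge> 0" if w: "w \<in> K" for w
  proof -
    have "b \<le> a1 \<bullet> (w - x0) + a2 * (- (g \<bullet> (w - x0)))" by (rule T) (use w in simp_all)
    then have "(1 / - a2) * (a1 \<bullet> (w - x0)) + g \<bullet> (w - x0) \<ge> 0"
      using \<open>b \<ge> 0\<close> c by (simp add: field_simps)
    moreover have "(g + \<xi>) \<bullet> (w - x0) = (1 / - a2) * (a1 \<bullet> (w - x0)) + g \<bullet> (w - x0)"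
      unfolding \<xi>_def by (simp add: inner_add_left inner_diff_left)
    ultimately show ?thesis by simp
  qed
  ultimately show ?thesis by blast
qed

lemma subgradient_optimality_condition:
  fixes G :: "'a::euclidean_space \<Rightarrow> real"
  assumes G: "convex_on UNIV G" and K: "convex K" "x0 \<in> K"
    and opt: "\<forall>w\<in>K. G x0 \<le> G w + g \<bullet> (w - x0)"
  shows "\<exists>\<xi>\<in>subdiff G x0. \<forall>w\<in>K. (g + \<xi>) \<bullet> (w - x0) \<ge> 0"
proof -
  let ?S = "{(d, r). G (x0 + d) - G x0 < r}" and ?T = "{(d, r). x0 + d \<in> K \<and> r \<le> - (g \<bullet> d)}"
  have "(0, 1) \<in> ?S" "(0, 0) \<in> ?T" using K by auto
  moreover have "?S \<inter> ?T = {}" using opt by fastforce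
  ultimately obtain a b where ab: "a \<noteq> 0" "\<forall>p\<in>?S. inner a p \<le> b" "\<forall>p\<in>?T. inner a p \<ge> b"
    using separating_hyperplane_sets[OF convex_strict_epigraph_shift[OF G] convex_feasible_hypograph[OF K(1)]]
    by blast
  obtain a1 a2 where a: "a = (a1, a2)" by force
  show ?thesis
    by (rule subgradient_of_separating_hyperplane[of G x0 a1 a2 b K g]) (use ab a K in auto)
qed

lemma subdiff_nonempty:
  fixes G :: "'a::euclidean_space \<Rightarrow> real"
  assumes "convex_on UNIV G"
  shows "\<exists>\<xi>. \<xi> \<in> subdiff G x0"
  using subgradient_optimality_condition[of G "{x0}" x0 0] assms by auto

section \<open>Real sequences\<close>

lemma summable_of_contracting_recurrence:
  fixes a b :: "nat \<Rightarrow> real"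
  assumes a0: "\<And>k. a k \<ge> 0" and b0: "\<And>k. b k \<ge> 0" and sb: "summable b"
    and \<rho>: "0 \<le> \<rho>" "\<rho> < 1" and rec: "\<And>k. k \<ge> k0 \<Longrightarrow> a (Suc k) \<le> \<rho> * a k + b k"
  shows "summable a"
proof -
  define a' where "a' n = a (n + k0)" for n
  define b' where "b' n = b (n + k0)" for n
  have sb': "summable b'" unfolding b'_def using sb by simp
  have rec': "a' (Suc n) \<le> \<rho> * a' n + b' n" for n using rec[of "n + k0"] by (simp add: a'_def b'_def)
  have bnd: "(1 - \<rho>) * (\<Sum>n<N. a' n) \<le> a' 0 + suminf b'" for N
  proof -
    have "(\<Sum>n<N. a' (Suc n)) \<le> (\<Sum>n<N. \<rho> * a' n + b' n)" by (rule sum_mono) (rule rec')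
    also have "\<dots> = \<rho> * (\<Sum>n<N. a' n) + (\<Sum>n<N. b' n)" by (simp add: sum.distrib sum_distrib_left)
    also have "(\<Sum>n<N. b' n) \<le> suminf b'"
      by (rule sum_le_suminf[OF sb']) (auto simp: b'_def b0)
    finally have 1: "(\<Sum>n<N. a' (Suc n)) \<le> \<rho> * (\<Sum>n<N. a' n) + suminf b'" by simp
    have "(\<Sum>n<Suc N. a' n) = a' 0 + (\<Sum>n<N. a' (Suc n))" by (rule sum.lessThan_Suc_shift)
    moreover have "(\<Sum>n<N. a' n) \<le> (\<Sum>n<Suc N. a' n)" using a0 by (simp add: a'_def)
    ultimately show ?thesis using 1 by (simp add: algebra_simps)
  qed
  have "summable a'"
  proof (rule summableI_nonneg_bounded)
    show "0 \<le> a' n" for n using a0 by (simp add: a'_def)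
    show "(\<Sum>n<N. a' n) \<le> (a' 0 + suminf b') / (1 - \<rho>)" for N
      using bnd[of N] \<rho> by (simp add: field_simps)
  qed
  then show ?thesis unfolding a'_def by simp
qed

lemma frequently_below_of_weighted_summable:
  fixes g \<alpha> :: "nat \<Rightarrow> real"
  assumes a0: "\<And>n. \<alpha> n \<ge> 0" and sag: "summable (\<lambda>n. \<alpha> n * g n)" and ns: "\<not> summable \<alpha>"
    and \<delta>: "\<delta> > 0"
  shows "\<exists>m\<ge>N. g m < \<delta>"
proof (rule ccontr)
  assume high: "\<not> (\<exists>m\<ge>N. g m < \<delta>)"
  have "norm (\<alpha> m) \<le> (1 / \<delta>) * (\<alpha> m * g m)" if "m \<ge> N" for m
  proof -
    have "\<alpha> m * \<delta> \<le> \<alpha> m * g m" using high that a0 by (intro mult_left_mono) (auto simp: not_less)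
    then show ?thesis using a0[of m] \<delta> by (simp add: field_simps)
  qed
  then have "summable \<alpha>" by (rule summable_comparison_test'[OF summable_mult[OF sag]])
  then show False using ns by simp
qed

lemma last_below_before:
  fixes g :: "nat \<Rightarrow> real"
  assumes "m \<le> n" "g m < \<delta>" "\<delta> \<le> g n"
  shows "\<exists>m'. m \<le> m' \<and> m' < n \<and> g m' < \<delta> \<and> (\<forall>k. m' < k \<and> k \<le> n \<longrightarrow> \<delta> \<le> g k)"
proof -
  define A where "A = {k. m \<le> k \<and> k \<le> n \<and> g k < \<delta>}"
  have A: "finite A" "m \<in> A" using assms unfolding A_def by auto
  define m' where "m' = Max A"
  have m'A: "m' \<in> A" unfolding m'_def using A Max_in by blast
  have "\<delta> \<le> g k" if "m' < k" "k \<le> n" for k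
  proof (rule ccontr)
    assume "\<not> \<delta> \<le> g k"
    then have "k \<in> A" using that m'A unfolding A_def by auto
    then show False using that A unfolding m'_def by (meson Max_ge leD)
  qed
  moreover have "m' \<noteq> n" using m'A assms(3) unfolding A_def by auto
  ultimately show ?thesis using m'A unfolding A_def by auto
qed

text \<open>\<open>g\<close> returns below any level \<open>\<delta>\<close> infinitely often, and from such a late time it cannot
  climb to \<open>2\<delta>\<close>: it would have to spend \<open>\<alpha>\<close>-mass at least \<open>\<delta> / (2c)\<close> above \<open>\<delta>\<close>.\<close>

lemma tendsto_zero_of_weighted_summable:
  fixes g \<alpha> :: "nat \<Rightarrow> real"
  assumes g0: "\<And>n. g n \<ge> 0" and a0: "\<And>n. \<alpha> n \<ge> 0" and c: "c > 0"
    and inc: "\<And>n. g (Suc n) - g n \<le> c * \<alpha> n"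
    and alim: "\<alpha> \<longlonglongrightarrow> 0" and sag: "summable (\<lambda>n. \<alpha> n * g n)" and ns: "\<not> summable \<alpha>"
  shows "g \<longlonglongrightarrow> 0"
proof (rule LIMSEQ_I)
  fix r :: real assume r: "r > 0"
  define \<delta> where "\<delta> = r / 4"
  have \<delta>: "\<delta> > 0" using r \<delta>_def by simp
  have "\<delta> / (2 * c) > 0" using \<delta> c by simp
  then obtain N1 where N1: "\<And>n. n \<ge> N1 \<Longrightarrow> norm (\<alpha> n - 0) < \<delta> / (2 * c)"
    using LIMSEQ_D[OF alim] by blast
  have "\<delta> * \<delta> / (2 * c) > 0" using \<delta> c by simp
  then obtain N2 where N2: "\<And>m n. m \<ge> N2 \<Longrightarrow> norm (\<Sum>k\<in>{m..<n}. \<alpha> k * g k) < \<delta> * \<delta> / (2 * c)"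
    using sag[unfolded summable_Cauchy] by blast
  obtain m where m: "m \<ge> max N1 N2" "g m < \<delta>"
    using frequently_below_of_weighted_summable[OF a0 sag ns \<delta>] by blast
  have below: "g n < 2 * \<delta>" if n: "n \<ge> m" for n
  proof (cases "g n < \<delta>")
    case True then show ?thesis using \<delta> by simp
  next
    case False
    then obtain m' where m': "m \<le> m'" "m' < n" "g m' < \<delta>"
      and high: "\<And>k. m' < k \<Longrightarrow> k \<le> n \<Longrightarrow> \<delta> \<le> g k"
      using last_below_before[of m n g \<delta>] n m(2) False by auto
    have "g n - g m' = (\<Sum>k\<in>{m'..<n}. g (Suc k) - g k)" using m' by (simp add: sum_Suc_diff')
    also have "\<dots> \<le> (\<Sum>k\<in>{m'..<n}. c * \<alpha> k)" by (rule sum_mono) (rule inc)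
    also have "\<dots> = c * \<alpha> m' + c * (\<Sum>k\<in>{Suc m'..<n}. \<alpha> k)"
      using m' by (simp add: sum.atLeast_Suc_lessThan sum_distrib_left)
    finally have step: "g n - g m' \<le> c * \<alpha> m' + c * (\<Sum>k\<in>{Suc m'..<n}. \<alpha> k)" .
    have "c * \<alpha> m' \<le> \<delta> / 2" using N1[of m'] m m' a0[of m'] c by (simp add: field_simps)
    moreover have "c * (\<Sum>k\<in>{Suc m'..<n}. \<alpha> k) \<le> \<delta> / 2"
    proof -
      have "\<delta> * (\<Sum>k\<in>{Suc m'..<n}. \<alpha> k) \<le> (\<Sum>k\<in>{Suc m'..<n}. \<alpha> k * g k)"
        unfolding sum_distrib_left
      proof (rule sum_mono)
        fix k assume "k \<in> {Suc m'..<n}"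
        then have "\<delta> \<le> g k" using high by simp
        then show "\<delta> * \<alpha> k \<le> \<alpha> k * g k" using a0[of k] by (metis mult.commute mult_left_mono)
      qed
      also have "\<dots> \<le> norm (\<Sum>k\<in>{Suc m'..<n}. \<alpha> k * g k)" by simp
      also have "\<dots> < \<delta> * \<delta> / (2 * c)" using N2 m m' by simp
      finally show ?thesis using \<delta> c by (simp add: field_simps)
    qed
    ultimately show ?thesis using step m'(3) by simp
  qed
  show "\<exists>N. \<forall>n\<ge>N. norm (g n - 0) < r"
  proof (intro exI allI impI)
    fix n assume "m \<le> n"
    then show "norm (g n - 0) < r" using below[of n] g0[of n] \<delta> \<delta>_def by simp
  qed
qed

lemma sum_lessThan_mult_div:
  fixes \<beta> :: "nat \<Rightarrow> real"
  shows "(\<Sum>n<N * P. \<beta> (n div P)) = of_nat P * (\<Sum>k<N. \<beta> k)"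
proof (induction N)
  case 0 then show ?case by simp
next
  case (Suc N)
  have "{..<Suc N * P} = {..<N * P} \<union> {N * P..<N * P + P}" by auto
  then have "(\<Sum>n<Suc N * P. \<beta> (n div P)) = (\<Sum>n<N * P. \<beta> (n div P)) + (\<Sum>n\<in>{N * P..<N * P + P}. \<beta> (n div P))"
    by (simp add: sum.union_disjoint ivl_disj_int)
  moreover have "(\<Sum>n\<in>{N * P..<N * P + P}. \<beta> (n div P)) = (\<Sum>n\<in>{N * P..<N * P + P}. \<beta> N)"
  proof (rule sum.cong)
    fix n assume "n \<in> {N * P..<N * P + P}"
    then have "n div P = N" by (auto intro: div_nat_eqI simp: mult.commute)
    then show "\<beta> (n div P) = \<beta> N" by simp
  qed simp
  ultimately show ?case using Suc by (simp add: algebra_simps)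
qed

lemma summable_of_block_majorant:
  fixes f \<beta> :: "nat \<Rightarrow> real"
  assumes f0: "\<And>n. f n \<ge> 0" and fb: "\<And>n. f n \<le> \<beta> (n div P)" and P: "P > 0"
    and sb: "summable \<beta>"
  shows "summable f"
proof (rule summableI_nonneg_bounded)
  show "0 \<le> f n" for n by (rule f0)
  have b0: "\<beta> k \<ge> 0" for k using f0[of "k * P"] fb[of "k * P"] P by simp
  show "(\<Sum>n<N. f n) \<le> of_nat P * suminf \<beta>" for N
  proof -
    have "(\<Sum>n<N. f n) \<le> (\<Sum>n<N * P. f n)"
      using P f0 by (intro sum_mono2) (auto simp: le_less_trans[OF _ mult_strict_left_mono] intro!: sum_mono2)
    also have "\<dots> \<le> (\<Sum>n<N * P. \<beta> (n div P))" by (rule sum_mono) (rule fb)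
    also have "\<dots> = of_nat P * (\<Sum>k<N. \<beta> k)" by (rule sum_lessThan_mult_div)
    also have "\<dots> \<le> of_nat P * suminf \<beta>"
      using sum_le_suminf[OF sb, of "{..<N}"] b0 by (intro mult_left_mono) auto
    finally show ?thesis .
  qed
qed

lemma LIMSEQ_zero_of_square:
  fixes a :: "nat \<Rightarrow> real"
  assumes "(\<lambda>n. (a n)\<^sup>2) \<longlonglongrightarrow> 0"
  shows "a \<longlonglongrightarrow> 0"
proof -
  have "(\<lambda>n. sqrt ((a n)\<^sup>2)) \<longlonglongrightarrow> sqrt 0" using assms by (rule tendsto_real_sqrt)
  then show ?thesis by (simp add: tendsto_rabs_zero_iff)
qed

lemma square_contraction_bound:
  fixes \<rho> a b :: real
  assumes "0 \<le> \<rho>" "\<rho> < 1" "a \<ge> 0" "b \<ge> 0"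
  shows "(\<rho> * a + b)\<^sup>2 \<le> \<rho> * a\<^sup>2 + b\<^sup>2 / (1 - \<rho>)"
proof -
  have pos: "1 - \<rho> > 0" using assms by simp
  have "(1 - \<rho>) * (\<rho> * a\<^sup>2 + b\<^sup>2 / (1 - \<rho>) - (\<rho> * a + b)\<^sup>2) = \<rho> * ((1 - \<rho>) * a - b)\<^sup>2"
    using pos by (simp add: field_simps power2_eq_square)
  also have "\<dots> \<ge> 0" using assms by simp
  finally have "(1 - \<rho>) * (\<rho> * a\<^sup>2 + b\<^sup>2 / (1 - \<rho>) - (\<rho> * a + b)\<^sup>2) \<ge> 0" .
  then show ?thesis using pos by (simp add: zero_le_mult_iff)
qed

lemma summable_square_of_perturbed_contraction:
  fixes V a :: "nat \<Rightarrow> real"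
  assumes V0: "\<And>k. V k \<ge> 0" and a0: "\<And>k. a k \<ge> 0" and \<rho>: "0 \<le> \<rho>" "\<rho> < 1" and c: "c \<ge> 0"
    and rec: "\<And>k. V (Suc k) \<le> \<rho> * V k + c * a k * (1 + V k)"
    and alim: "a \<longlonglongrightarrow> 0" and sa: "summable (\<lambda>k. (a k)\<^sup>2)"
  shows "summable (\<lambda>k. (V k)\<^sup>2)"
proof -
  define \<rho>' where "\<rho>' = (1 + \<rho>) / 2"
  have \<rho>': "0 \<le> \<rho>'" "\<rho>' < 1" using \<rho> unfolding \<rho>'_def by auto
  have "(\<lambda>k. c * a k) \<longlonglongrightarrow> 0" using tendsto_mult_right_zero[OF alim] .
  moreover have "(1 - \<rho>) / 2 > 0" using \<rho> by simp
  ultimately have "eventually (\<lambda>k. c * a k < (1 - \<rho>) / 2) sequentially" by (rule order_tendstoD(2))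
  then obtain k0 where k0: "\<And>k. k \<ge> k0 \<Longrightarrow> c * a k < (1 - \<rho>) / 2"
    by (auto simp: eventually_sequentially)
  have "(V (Suc k))\<^sup>2 \<le> \<rho>' * (V k)\<^sup>2 + (c * a k)\<^sup>2 / (1 - \<rho>')" if k: "k \<ge> k0" for k
  proof -
    have "c * a k * V k \<le> (1 - \<rho>) / 2 * V k" using k0[OF k] V0[of k] by (intro mult_right_mono) auto
    moreover have "\<rho>' * V k = \<rho> * V k + (1 - \<rho>) / 2 * V k" unfolding \<rho>'_def by (simp add: field_simps)
    moreover have "c * a k * (1 + V k) = c * a k + c * a k * V k" by (simp add: algebra_simps)
    ultimately have "V (Suc k) \<le> \<rho>' * V k + c * a k" using rec[of k] by linarith
    then have "(V (Suc k))\<^sup>2 \<le> (\<rho>' * V k + c * a k)\<^sup>2" using V0[of "Suc k"] by (intro power_mono) auto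
    also have "\<dots> \<le> \<rho>' * (V k)\<^sup>2 + (c * a k)\<^sup>2 / (1 - \<rho>')"
      using \<rho>' V0[of k] c a0[of k] by (intro square_contraction_bound) auto
    finally show ?thesis .
  qed
  moreover have "summable (\<lambda>k. (c * a k)\<^sup>2 / (1 - \<rho>'))"
    using sa by (simp add: power_mult_distrib summable_mult summable_divide)
  ultimately show ?thesis
    using \<rho>' by (intro summable_of_contracting_recurrence[of "\<lambda>k. (V k)\<^sup>2" "\<lambda>k. (c * a k)\<^sup>2 / (1 - \<rho>')"]) auto
qed

text \<open>The coupled system is reduced to a single perturbed contraction for \<open>X + \<mu> Y\<close>, with
  \<open>\<mu>\<close> small enough that the cross term \<open>\<mu> c' X\<close> costs only half of the contraction.\<close>

lemma summable_square_of_coupled_recurrence: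
  fixes X Y a :: "nat \<Rightarrow> real"
  assumes X0: "\<And>k. X k \<ge> 0" and Y0: "\<And>k. Y k \<ge> 0" and a0: "\<And>k. a k \<ge> 0"
    and \<gamma>: "0 < \<gamma>" "\<gamma> \<le> 1" and c: "c \<ge> 0" and c': "c' \<ge> 0"
    and rX: "\<And>k. X (Suc k) \<le> (1 - \<gamma>) * X k + c * a k * (1 + X k + Y k)"
    and rY: "\<And>k. Y (Suc k) \<le> (1 - \<gamma>) * Y k + c' * X k + c * a k * (1 + X k + Y k)"
    and alim: "a \<longlonglongrightarrow> 0" and sa: "summable (\<lambda>k. (a k)\<^sup>2)"
  shows "summable (\<lambda>k. (X k + Y k)\<^sup>2)"
proof -
  define \<mu> where "\<mu> = \<gamma> / (2 * c' + 2)"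
  have \<mu>: "0 < \<mu>" "\<mu> \<le> 1 / 2" "\<mu> * c' \<le> \<gamma> / 2"
    using \<gamma> c' unfolding \<mu>_def by (auto simp: field_simps)
  define V where "V k = X k + \<mu> * Y k" for k
  have V0: "V k \<ge> 0" for k using X0 Y0 \<mu> unfolding V_def by simp
  have XY: "\<mu> * (X k + Y k) \<le> V k" for k
    unfolding V_def using \<mu> X0[of k] by (simp add: algebra_simps mult_left_le_one_le)
  have rV: "V (Suc k) \<le> (1 - \<gamma> / 2) * V k + (2 * c / \<mu>) * a k * (1 + V k)" for k
  proof -
    let ?e = "c * a k * (1 + X k + Y k)"
    have "V (Suc k) \<le> (1 - \<gamma>) * X k + ?e + \<mu> * ((1 - \<gamma>) * Y k + c' * X k + ?e)"
      using rX[of k] mult_left_mono[OF rY[of k] less_imp_le[OF \<mu>(1)]] unfolding V_def by linarith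
    also have "\<dots> = (1 - \<gamma> + \<mu> * c') * X k + (1 - \<gamma>) * (\<mu> * Y k) + (1 + \<mu>) * ?e"
      by (simp add: algebra_simps)
    also have "\<dots> \<le> (1 - \<gamma> / 2) * X k + (1 - \<gamma> / 2) * (\<mu> * Y k) + 2 * ?e"
      using \<mu> \<gamma> X0[of k] Y0[of k] c a0[of k] by (intro add_mono mult_right_mono) auto
    finally have "V (Suc k) \<le> (1 - \<gamma> / 2) * V k + 2 * ?e" unfolding V_def by (simp add: algebra_simps)
    moreover have "2 * ?e \<le> (2 * c / \<mu>) * a k * (1 + V k)"
    proof -
      have "\<mu> * (1 + X k + Y k) \<le> 1 + V k" using XY[of k] \<mu> by (simp add: algebra_simps)
      then have "(2 * c * a k) * (\<mu> * (1 + X k + Y k)) \<le> (2 * c * a k) * (1 + V k)"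
        using c a0[of k] by (intro mult_left_mono) auto
      then show ?thesis using \<mu> by (simp add: field_simps)
    qed
    ultimately show ?thesis by simp
  qed
  have "summable (\<lambda>k. (V k)\<^sup>2)"
    using \<gamma> \<mu> c by (intro summable_square_of_perturbed_contraction[OF V0 a0 _ _ _ rV alim sa]) auto
  then have "summable (\<lambda>k. (1 / \<mu>)\<^sup>2 * (V k)\<^sup>2)" by (rule summable_mult)
  then show ?thesis
  proof (rule summable_comparison_test'[where N = 0])
    fix k :: nat
    have "X k + Y k \<le> (1 / \<mu>) * V k" using XY[of k] \<mu> by (simp add: field_simps)
    then have "(X k + Y k)\<^sup>2 \<le> ((1 / \<mu>) * V k)\<^sup>2" using X0[of k] Y0[of k] by (intro power_mono) auto
    then show "norm ((X k + Y k)\<^sup>2) \<le> (1 / \<mu>)\<^sup>2 * (V k)\<^sup>2" by (simp add: power_divide)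
  qed
qed

section \<open>Spread of a finite family of vectors\<close>

definition spread :: "nat set \<Rightarrow> (nat \<Rightarrow> 'a::real_normed_vector) \<Rightarrow> real" where
  "spread V u = Max ((\<lambda>p. norm (u (fst p) - u (snd p))) ` (V \<times> V))"

lemma norm_diff_le_spread:
  assumes "finite V" "i \<in> V" "j \<in> V"
  shows "norm (u i - u j) \<le> spread V u"
  unfolding spread_def using assms by (intro Max_ge) (auto intro!: image_eqI[of _ _ "(i, j)"])

lemma spread_le:
  assumes "finite V" "V \<noteq> {}" "\<And>i j. i \<in> V \<Longrightarrow> j \<in> V \<Longrightarrow> norm (u i - u j) \<le> c"
  shows "spread V u \<le> c"
  unfolding spread_def using assms by (subst Max_le_iff) auto

lemma spread_nonneg:
  assumes "finite V" "V \<noteq> {}"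
  shows "spread V u \<ge> 0"
proof -
  obtain i where "i \<in> V" using assms by auto
  then show ?thesis using norm_diff_le_spread[OF assms(1), of i i u] by simp
qed

lemma norm_diff_mean_le_spread:
  fixes u :: "nat \<Rightarrow> 'a::real_normed_vector"
  assumes "finite V" "card V > 0" "i \<in> V"
  shows "norm (u i - (1 / real (card V)) *\<^sub>R (\<Sum>j\<in>V. u j)) \<le> spread V u"
proof -
  have cV: "real (card V) > 0" using assms by simp
  have "u i - (1 / real (card V)) *\<^sub>R (\<Sum>j\<in>V. u j) = (1 / real (card V)) *\<^sub>R (\<Sum>j\<in>V. (u i - u j))"
  proof -
    have "(\<Sum>j\<in>V. u i) = real (card V) *\<^sub>R u i" by (simp add: sum_constant_scaleR)
    then show ?thesis using cV by (simp add: sum_subtractf scaleR_diff_right)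
  qed
  then have "norm (u i - (1 / real (card V)) *\<^sub>R (\<Sum>j\<in>V. u j)) \<le> (1 / real (card V)) * (\<Sum>j\<in>V. norm (u i - u j))"
    using cV by (simp add: norm_sum divide_right_mono)
  also have "\<dots> \<le> (1 / real (card V)) * (\<Sum>j\<in>V. spread V u)"
    using norm_diff_le_spread[OF assms(1) assms(3)] cV by (intro mult_left_mono sum_mono) auto
  also have "\<dots> = spread V u" using cV by simp
  finally show ?thesis .
qed

section \<open>Consensus over a jointly strongly connected network\<close>

lemma rtrancl_edge_leaving:
  assumes "(a, b) \<in> R\<^sup>*" "a \<in> A" "b \<notin> A"
  shows "\<exists>c d. (c, d) \<in> R \<and> c \<in> A \<and> d \<notin> A"
  using assms by (induction rule: rtrancl_induct) auto

locale consensus_network =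
  fixes I :: nat and E :: "nat \<Rightarrow> (nat \<times> nat) set" and \<theta> :: "nat \<Rightarrow> nat \<Rightarrow> real"
    and \<theta>\<^sub>0 :: real and B :: nat
  assumes I_pos: "I \<ge> 1"
    and E_sub: "\<forall>n. E n \<subseteq> {1..I} \<times> {1..I}"
    and theta0_range: "0 < \<theta>\<^sub>0" "\<theta>\<^sub>0 < 1"
    and theta_range: "\<forall>i\<in>{1..I}. \<forall>j\<in>{1..I}. \<theta>\<^sub>0 \<le> \<theta> i j \<and> \<theta> i j \<le> 1"
    and B1: "B > 0" "\<forall>k. strongly_connected_dg {1..I} (\<Union>n\<in>{k*B..<(k+1)*B}. E n)"
    and B2: "\<forall>n. \<forall>i\<in>{1..I}. (\<Sum>j\<in>{1..I}. weight E \<theta> n i j) = 1"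
            "\<forall>n. \<forall>j\<in>{1..I}. (\<Sum>i\<in>{1..I}. weight E \<theta> n i j) = 1"
begin

abbreviation "V \<equiv> {1..I}"
abbreviation "w \<equiv> weight E \<theta>"

lemma V_fin: "finite V" and V_ne: "V \<noteq> {}" and V_card: "card V = I"
  using I_pos by auto

lemma w_nonneg: "i \<in> V \<Longrightarrow> j \<in> V \<Longrightarrow> w n i j \<ge> 0"
proof -
  assume "i \<in> V" "j \<in> V"
  then have "\<theta>\<^sub>0 \<le> \<theta> i j" using theta_range by blast
  then show ?thesis using theta0_range unfolding weight_def by auto
qed

lemma w_diag: "i \<in> V \<Longrightarrow> w n i i \<ge> \<theta>\<^sub>0"
  using theta_range unfolding weight_def in_nbrs_def by auto

lemma w_edge: "(a, b) \<in> E n \<Longrightarrow> w n b a \<ge> \<theta>\<^sub>0"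
  using theta_range E_sub unfolding weight_def in_nbrs_def by fastforce

lemma w_row: "i \<in> V \<Longrightarrow> (\<Sum>j\<in>V. w n i j) = 1"
  using B2 by auto

lemma w_col: "j \<in> V \<Longrightarrow> (\<Sum>i\<in>V. w n i j) = 1"
  using B2 by auto

lemma sum_w_le:
  fixes p b :: "nat \<Rightarrow> real"
  assumes "i \<in> V" "\<And>j. j \<in> V \<Longrightarrow> p j \<le> b j"
  shows "(\<Sum>j\<in>V. w n i j * p j) \<le> (\<Sum>j\<in>V. w n i j * b j)"
  using assms w_nonneg by (intro sum_mono mult_left_mono) auto

lemma sum_w_const: "i \<in> V \<Longrightarrow> (\<Sum>j\<in>V. w n i j * c) = c"
  using w_row[of i n] by (simp add: sum_distrib_right[symmetric])

text \<open>\<open>reach j\<^sub>0 s n\<close>: the agents that information starting at \<open>j\<^sub>0\<close> at time \<open>s\<close> has reached after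
  \<open>n\<close> steps.\<close>

fun reach :: "nat \<Rightarrow> nat \<Rightarrow> nat \<Rightarrow> nat set" where
  "reach j0 s 0 = {j0}"
| "reach j0 s (Suc n) = reach j0 s n \<union> {b\<in>V. \<exists>a\<in>reach j0 s n. (a, b) \<in> E (s + n)}"

lemma reach_mono: "m \<le> n \<Longrightarrow> reach j0 s m \<subseteq> reach j0 s n"
  by (induction n) (auto simp: le_Suc_eq)

lemma reach_subset: "j0 \<in> V \<Longrightarrow> reach j0 s n \<subseteq> V"
  by (induction n) auto

lemma start_in_reach: "j0 \<in> reach j0 s n"
  using reach_mono[of 0 n j0 s] by auto

lemma card_reach_grows:
  assumes j0: "j0 \<in> V" and R: "reach j0 (k * B) (m * B) \<noteq> V"
  shows "card (reach j0 (k * B) (Suc m * B)) > card (reach j0 (k * B) (m * B))"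
proof -
  let ?R = "reach j0 (k * B) (m * B)"
  obtain b where b: "b \<in> V" "b \<notin> ?R" using R reach_subset[OF j0] by blast
  let ?Ed = "\<Union>n\<in>{(k + m) * B..<(k + m + 1) * B}. E n"
  have "strongly_connected_dg V ?Ed" using B1(2) by blast
  then have "(j0, b) \<in> (?Ed \<inter> (V \<times> V))\<^sup>*"
    using j0 b(1) unfolding strongly_connected_dg_def by blast
  then obtain c d where cd: "(c, d) \<in> ?Ed \<inter> (V \<times> V)" "c \<in> ?R" "d \<notin> ?R"
    using rtrancl_edge_leaving[of j0 b _ ?R] start_in_reach[of j0 "k * B" "m * B"] b(2) by blast
  then obtain n where n: "n \<in> {(k + m) * B..<(k + m + 1) * B}" "(c, d) \<in> E n" by blast
  define n' where "n' = n - k * B"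
  have n': "m * B \<le> n'" "n' < Suc m * B" "n = k * B + n'"
    using n(1) unfolding n'_def by (auto simp: algebra_simps)
  have "c \<in> reach j0 (k * B) n'" using cd(2) reach_mono[OF n'(1)] by blast
  then have "d \<in> reach j0 (k * B) (Suc n')" using cd(1) n(2) n'(3) by auto
  moreover have "reach j0 (k * B) (Suc n') \<subseteq> reach j0 (k * B) (Suc m * B)"
    using n'(2) by (intro reach_mono) simp
  moreover have "?R \<subseteq> reach j0 (k * B) (Suc m * B)" by (intro reach_mono) simp
  ultimately have "?R \<subset> reach j0 (k * B) (Suc m * B)" using cd(3) by blast
  moreover have "finite (reach j0 (k * B) (Suc m * B))"
    using reach_subset[OF j0] finite_subset V_fin by blast
  ultimately show ?thesis by (rule psubset_card_mono[rotated])
qed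

lemma card_reach_ge: "j0 \<in> V \<Longrightarrow> card (reach j0 (k * B) (m * B)) \<ge> min I (Suc m)"
proof (induction m)
  case 0 then show ?case using I_pos by simp
next
  case (Suc m)
  show ?case
  proof (cases "reach j0 (k * B) (m * B) = V")
    case True
    then have "V \<subseteq> reach j0 (k * B) (Suc m * B)" using reach_mono[of "m * B" "Suc m * B"] by auto
    moreover have "finite (reach j0 (k * B) (Suc m * B))"
      using reach_subset[OF Suc.prems] V_fin finite_subset by blast
    ultimately have "card V \<le> card (reach j0 (k * B) (Suc m * B))" by (rule card_mono[rotated])
    then show ?thesis using V_card by simp
  next
    case False
    then show ?thesis using card_reach_grows[OF Suc.prems False] Suc by simp
  qed
qed

lemma reach_window_eq_V: "j0 \<in> V \<Longrightarrow> reach j0 (k * B) (I * B) = V"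
proof -
  assume j0: "j0 \<in> V"
  have "card V \<le> card (reach j0 (k * B) (I * B))" using card_reach_ge[OF j0, where k = k and m = I] V_card by simp
  then show ?thesis using card_seteq[OF V_fin reach_subset[OF j0]] by blast
qed

lemma mixing_step_gain:
  fixes q :: "nat \<Rightarrow> real"
  assumes i: "i \<in> V" and R: "R \<subseteq> V" and new: "i \<in> R \<or> (\<exists>a\<in>R. (a, i) \<in> E n)"
    and up: "\<And>j. j \<in> V \<Longrightarrow> q j \<le> S" and low: "\<And>j. j \<in> R \<Longrightarrow> q j \<le> S - g" and g: "g \<ge> 0"
  shows "(\<Sum>j\<in>V. w n i j * q j) \<le> S - \<theta>\<^sub>0 * g"
proof -
  obtain a where a: "a \<in> R" "w n i a \<ge> \<theta>\<^sub>0"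
    using new w_diag[OF i] w_edge by blast
  have aV: "a \<in> V" using a(1) R by blast
  have "(\<Sum>j\<in>V. w n i j * q j) \<le> (\<Sum>j\<in>V. w n i j * (S - (if j = a then g else 0)))"
    using up low a(1) i by (intro sum_w_le) auto
  also have "\<dots> = (\<Sum>j\<in>V. w n i j * S) - (\<Sum>j\<in>V. if j = a then w n i a * g else 0)"
    by (simp add: right_diff_distrib sum_subtractf if_distrib[of "(*) _"] cong: if_cong)
  also have "\<dots> = S - w n i a * g" using sum_w_const[OF i] aV V_fin by simp
  also have "\<dots> \<le> S - \<theta>\<^sub>0 * g" using a(2) g by (simp add: mult_right_mono)
  finally show ?thesis .
qed

text \<open>An agent newly reached from \<open>j\<^sub>0\<close> puts weight at least \<open>\<theta>\<^sub>0\<close> on an agent reached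
  before, so the margin below the common upper bound shrinks by at most the factor \<open>\<theta>\<^sub>0\<close> per
  step.\<close>

lemma scalar_mixing_bound:
  fixes p \<epsilon> :: "nat \<Rightarrow> nat \<Rightarrow> real" and \<eta> :: "nat \<Rightarrow> real"
  assumes rec: "\<forall>t. \<forall>i\<in>V. p (Suc t) i = (\<Sum>j\<in>V. w t i j * p t j) + \<epsilon> t i"
    and eb: "\<forall>t. \<forall>i\<in>V. \<epsilon> t i \<le> \<eta> t"
    and j0: "j0 \<in> V" and up: "\<forall>i\<in>V. p s i \<le> M" and low: "p s j0 \<le> M - D" and D: "D \<ge> 0"
  shows "(\<forall>i\<in>V. p (s + n) i \<le> M + (\<Sum>t\<in>{s..<s + n}. \<eta> t))
       \<and> (\<forall>i\<in>reach j0 s n. p (s + n) i \<le> M + (\<Sum>t\<in>{s..<s + n}. \<eta> t) - \<theta>\<^sub>0 ^ n * D)"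
proof (induction n)
  case 0 then show ?case using up low by simp
next
  case (Suc n)
  define S where "S = M + (\<Sum>t\<in>{s..<s + n}. \<eta> t)"
  have IH1: "\<And>j. j \<in> V \<Longrightarrow> p (s + n) j \<le> S" using Suc unfolding S_def by blast
  have IH2: "\<And>j. j \<in> reach j0 s n \<Longrightarrow> p (s + n) j \<le> S - \<theta>\<^sub>0 ^ n * D" using Suc unfolding S_def by blast
  have step: "p (s + Suc n) i \<le> (\<Sum>j\<in>V. w (s + n) i j * p (s + n) j) + \<eta> (s + n)" if "i \<in> V" for i
    using rec eb that by simp
  have all: "\<forall>i\<in>V. p (s + Suc n) i \<le> S + \<eta> (s + n)"
  proof
    fix i assume i: "i \<in> V"
    have "(\<Sum>j\<in>V. w (s + n) i j * p (s + n) j) \<le> (\<Sum>j\<in>V. w (s + n) i j * S)"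
      using IH1 by (intro sum_w_le[OF i])
    then show "p (s + Suc n) i \<le> S + \<eta> (s + n)" using step[OF i] sum_w_const[OF i] by simp
  qed
  moreover have "\<forall>i\<in>reach j0 s (Suc n). p (s + Suc n) i \<le> S + \<eta> (s + n) - \<theta>\<^sub>0 ^ Suc n * D"
  proof
    fix i assume iR: "i \<in> reach j0 s (Suc n)"
    have iV: "i \<in> V" using iR reach_subset[OF j0] by blast
    have "(\<Sum>j\<in>V. w (s + n) i j * p (s + n) j) \<le> S - \<theta>\<^sub>0 * (\<theta>\<^sub>0 ^ n * D)"
      by (rule mixing_step_gain[OF iV reach_subset[OF j0] _ IH1 IH2])
        (use iR D theta0_range in auto)
    then show "p (s + Suc n) i \<le> S + \<eta> (s + n) - \<theta>\<^sub>0 ^ Suc n * D" using step[OF iV] by simp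
  qed
  moreover have "M + (\<Sum>t\<in>{s..<s + Suc n}. \<eta> t) = S + \<eta> (s + n)" unfolding S_def by simp
  ultimately show ?case by (simp only:)
qed

lemma perturbation_bound_nonneg:
  assumes "\<forall>t. \<forall>i\<in>V. norm (e t i :: 'a::real_normed_vector) \<le> \<eta> t"
  shows "\<eta> t \<ge> 0"
proof -
  have "(1::nat) \<in> V" using I_pos by simp
  then show ?thesis using assms by (meson norm_ge_zero order.trans)
qed

lemma inner_perturbed_mixing:
  fixes u e :: "nat \<Rightarrow> nat \<Rightarrow> 'a::euclidean_space"
  assumes rec: "\<forall>t. \<forall>i\<in>V. u (Suc t) i = (\<Sum>j\<in>V. w t i j *\<^sub>R u t j) + e t i"
    and eb: "\<forall>t. \<forall>i\<in>V. norm (e t i) \<le> \<eta> t" and v: "norm v = 1"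
  shows "\<forall>t. \<forall>i\<in>V. v \<bullet> u (Suc t) i = (\<Sum>j\<in>V. w t i j * (v \<bullet> u t j)) + v \<bullet> e t i"
    and "\<forall>t. \<forall>i\<in>V. v \<bullet> e t i \<le> \<eta> t"
proof -
  show "\<forall>t. \<forall>i\<in>V. v \<bullet> u (Suc t) i = (\<Sum>j\<in>V. w t i j * (v \<bullet> u t j)) + v \<bullet> e t i"
    using rec by (simp add: inner_add_right inner_sum_right)
  show "\<forall>t. \<forall>i\<in>V. v \<bullet> e t i \<le> \<eta> t"
  proof (intro allI ballI)
    fix t i assume "i \<in> V"
    have "v \<bullet> e t i \<le> norm v * norm (e t i)" by (rule norm_cauchy_schwarz)
    moreover have "norm (e t i) \<le> \<eta> t" using eb \<open>i \<in> V\<close> by blast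
    ultimately show "v \<bullet> e t i \<le> \<eta> t" using v by simp
  qed
qed

text \<open>Project onto the unit vector \<open>v\<close> pointing from \<open>u i\<^sub>2\<close> to \<open>u i\<^sub>1\<close> at the final time and
  apply the scalar bound to \<open>v \<bullet> u\<close> and \<open>-v \<bullet> u\<close>, both started at the minimiser \<open>j\<^sub>0\<close> of
  \<open>v \<bullet> u s\<close>.\<close>

lemma spread_pair_bound:
  fixes u e :: "nat \<Rightarrow> nat \<Rightarrow> 'a::euclidean_space"
  assumes rec: "\<forall>t. \<forall>i\<in>V. u (Suc t) i = (\<Sum>j\<in>V. w t i j *\<^sub>R u t j) + e t i"
    and eb: "\<forall>t. \<forall>i\<in>V. norm (e t i) \<le> \<eta> t"
    and i1: "i1 \<in> V" and i2: "i2 \<in> V"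
    and reached: "\<gamma> = 0 \<or> \<gamma> = \<theta>\<^sub>0 ^ n \<and> (\<forall>j0\<in>V. i1 \<in> reach j0 s n)"
  shows "norm (u (s + n) i1 - u (s + n) i2) \<le> (1 - \<gamma>) * spread V (u s) + 2 * (\<Sum>t\<in>{s..<s + n}. \<eta> t)"
proof (cases "u (s + n) i1 = u (s + n) i2")
  case True
  moreover have "spread V (u s) \<ge> 0" using spread_nonneg[OF V_fin V_ne] .
  moreover have "(\<Sum>t\<in>{s..<s + n}. \<eta> t) \<ge> 0" using perturbation_bound_nonneg[OF eb] by (intro sum_nonneg) auto
  moreover have "\<gamma> \<le> 1" using theta0_range reached by (auto intro: power_le_one)
  ultimately show ?thesis by simp
next
  case False
  let ?S = "\<Sum>t\<in>{s..<s + n}. \<eta> t" and ?D = "spread V (u s)"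
  define d where "d = u (s + n) i1 - u (s + n) i2"
  define v where "v = (1 / norm d) *\<^sub>R d"
  have nv: "norm v = 1" "norm (- v) = 1" using False unfolding v_def d_def by simp_all
  have "Min ((\<lambda>i. v \<bullet> u s i) ` V) \<in> (\<lambda>i. v \<bullet> u s i) ` V" using V_fin V_ne by (intro Min_in) auto
  then obtain j0 where j0V: "j0 \<in> V" and j0min: "v \<bullet> u s j0 = Min ((\<lambda>i. v \<bullet> u s i) ` V)" by auto
  have j0: "j0 \<in> V" "\<And>i. i \<in> V \<Longrightarrow> v \<bullet> u s j0 \<le> v \<bullet> u s i"
    using j0V j0min V_fin by auto
  have upper: "\<forall>i\<in>V. v \<bullet> u s i \<le> v \<bullet> u s j0 + ?D"
  proof
    fix i assume i: "i \<in> V"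
    have "v \<bullet> u s i - v \<bullet> u s j0 \<le> norm v * norm (u s i - u s j0)"
      by (metis inner_diff_right norm_cauchy_schwarz)
    then show "v \<bullet> u s i \<le> v \<bullet> u s j0 + ?D" using nv norm_diff_le_spread[OF V_fin i j0(1), of "u s"] by simp
  qed
  have D0: "?D \<ge> 0" using spread_nonneg[OF V_fin V_ne] .
  note mix1 = scalar_mixing_bound[OF inner_perturbed_mixing[OF rec eb nv(1)] j0(1) upper _ D0, of n]
  have "v \<bullet> u (s + n) i1 \<le> v \<bullet> u s j0 + ?D + ?S - \<gamma> * ?D"
  proof (cases "\<gamma> = 0")
    case True then show ?thesis using mix1 i1 by simp
  next
    case False
    then have "i1 \<in> reach j0 s n" "\<gamma> = \<theta>\<^sub>0 ^ n" using reached j0(1) by auto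
    then show ?thesis using mix1 by simp
  qed
  moreover have "(- v) \<bullet> u (s + n) i2 \<le> (- v) \<bullet> u s j0 + ?S"
  proof -
    have up: "\<forall>i\<in>V. (- v) \<bullet> u s i \<le> (- v) \<bullet> u s j0" using j0(2) by simp
    show ?thesis
      using scalar_mixing_bound[OF inner_perturbed_mixing[OF rec eb nv(2)] j0(1) up _ order.refl, where n = n]
        i2 by simp
  qed
  moreover have "v \<bullet> u (s + n) i1 - v \<bullet> u (s + n) i2 = norm d"
  proof -
    have "v \<bullet> u (s + n) i1 - v \<bullet> u (s + n) i2 = v \<bullet> d" unfolding d_def by (simp add: inner_diff_right)
    also have "\<dots> = norm d" using False unfolding v_def d_def by (simp add: dot_square_norm power2_eq_square)
    finally show ?thesis .
  qed
  ultimately show ?thesis unfolding d_def by (simp add: algebra_simps)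
qed

lemma spread_window_contraction:
  fixes u e :: "nat \<Rightarrow> nat \<Rightarrow> 'a::euclidean_space"
  assumes rec: "\<forall>t. \<forall>i\<in>V. u (Suc t) i = (\<Sum>j\<in>V. w t i j *\<^sub>R u t j) + e t i"
    and eb: "\<forall>t. \<forall>i\<in>V. norm (e t i) \<le> \<eta> t"
  shows "spread V (u (k * B + I * B)) \<le> (1 - \<theta>\<^sub>0 ^ (I * B)) * spread V (u (k * B)) + 2 * (\<Sum>t\<in>{k * B..<k * B + I * B}. \<eta> t)"
proof (rule spread_le[OF V_fin V_ne])
  fix i j assume ij: "i \<in> V" "j \<in> V"
  show "norm (u (k * B + I * B) i - u (k * B + I * B) j) \<le> (1 - \<theta>\<^sub>0 ^ (I * B)) * spread V (u (k * B)) + 2 * (\<Sum>t\<in>{k * B..<k * B + I * B}. \<eta> t)"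
    by (rule spread_pair_bound[OF rec eb ij]) (use reach_window_eq_V ij in blast)
qed

lemma spread_step:
  fixes u e :: "nat \<Rightarrow> nat \<Rightarrow> 'a::euclidean_space"
  assumes rec: "\<forall>t. \<forall>i\<in>V. u (Suc t) i = (\<Sum>j\<in>V. w t i j *\<^sub>R u t j) + e t i"
    and eb: "\<forall>t. \<forall>i\<in>V. norm (e t i) \<le> \<eta> t"
  shows "spread V (u (Suc t)) \<le> spread V (u t) + 2 * \<eta> t"
proof (rule spread_le[OF V_fin V_ne])
  fix i j assume ij: "i \<in> V" "j \<in> V"
  have "norm (u (t + 1) i - u (t + 1) j) \<le> (1 - 0) * spread V (u t) + 2 * (\<Sum>t\<in>{t..<t + 1}. \<eta> t)"
    by (rule spread_pair_bound[OF rec eb ij]) simp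
  then show "norm (u (Suc t) i - u (Suc t) j) \<le> spread V (u t) + 2 * \<eta> t" by simp
qed

end

section \<open>The NEXT iteration\<close>

text \<open>The hypotheses of the theorem, with the constants asserted to exist in (A2)--(A5) and (F3)
  fixed: \<open>S\<close> is the open set of (A2), \<open>LL\<close> and \<open>LS\<close> are Lipschitz constants common to all
  agents, \<open>LF\<close> bounds \<open>\<nabla>F\<close> and \<open>LG\<close> bounds the subgradients of \<open>G\<close> on \<open>K\<close>.\<close>

locale next_iteration = consensus_network I E \<theta> \<theta>\<^sub>0 B for I E \<theta> \<theta>\<^sub>0 B +
  fixes K :: "'a::euclidean_space set"
    and f :: "nat \<Rightarrow> 'a \<Rightarrow> real" and gf :: "nat \<Rightarrow> 'a \<Rightarrow> 'a"
    and G :: "'a \<Rightarrow> real"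
    and ft :: "nat \<Rightarrow> 'a \<Rightarrow> 'a \<Rightarrow> real" and gft :: "nat \<Rightarrow> 'a \<Rightarrow> 'a \<Rightarrow> 'a"
    and \<tau> :: "nat \<Rightarrow> real" and \<alpha> :: "nat \<Rightarrow> real"
    and x xt z y pit :: "nat \<Rightarrow> nat \<Rightarrow> 'a"
    and LL LS LF LG :: real and S :: "'a set"
  assumes K_ne: "K \<noteq> {}" and K_closed: "closed K" and K_convex: "convex K"
    and Sopen: "open S" "K \<subseteq> S"
    and fder: "\<forall>i\<in>{1..I}. \<forall>u\<in>S. (f i has_derivative (\<lambda>h. gf i u \<bullet> h)) (at u)"
    and LLip: "\<forall>i\<in>{1..I}. lipschitz_on LL K (gf i)"
    and LFb: "\<forall>u\<in>K. norm (\<Sum>i\<in>{1..I}. gf i u) \<le> LF"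
    and Gconv: "convex_on UNIV G" and LGb: "\<forall>u\<in>K. \<forall>\<xi>\<in>subdiff G u. norm \<xi> \<le> LG"
    and coercive: "coercive_on K (\<lambda>u. (\<Sum>i\<in>{1..I}. f i u) + G u)"
    and F_diff: "\<forall>i\<in>{1..I}. \<forall>v\<in>K. \<forall>u\<in>K.
               ((\<lambda>w. ft i w v) has_derivative (\<lambda>h. gft i u v \<bullet> h)) (at u within K)"
    and F1: "\<forall>i\<in>{1..I}. \<tau> i > 0 \<and> (\<forall>v\<in>K. strongly_convex_on K (\<tau> i) (\<lambda>w. ft i w v))"
    and F2: "\<forall>i\<in>{1..I}. \<forall>u\<in>K. gft i u u = gf i u"
    and LSLip: "\<forall>i\<in>{1..I}. \<forall>u\<in>K. lipschitz_on LS K (\<lambda>v. gft i u v)"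
    and step: "\<forall>n. 0 < \<alpha> n \<and> \<alpha> n \<le> 1" "\<not> summable \<alpha>" "summable (\<lambda>n. (\<alpha> n)\<^sup>2)"
    and init: "\<forall>i\<in>{1..I}. x 0 i \<in> K \<and> y 0 i = gf i (x 0 i)"
    and pit_def: "\<forall>n. \<forall>i\<in>{1..I}. pit n i = real I *\<^sub>R y n i - gf i (x n i)"
    and xt_def: "\<forall>n. \<forall>i\<in>{1..I}. xt n i \<in> K \<and>
               (\<forall>w\<in>K. ft i (xt n i) (x n i) + pit n i \<bullet> (xt n i - x n i) + G (xt n i)
                       \<le> ft i w (x n i) + pit n i \<bullet> (w - x n i) + G w)"
    and z_def: "\<forall>n. \<forall>i\<in>{1..I}. z n i = x n i + \<alpha> n *\<^sub>R (xt n i - x n i)"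
    and x_upd: "\<forall>n. \<forall>i\<in>{1..I}. x (Suc n) i = (\<Sum>j\<in>{1..I}. weight E \<theta> n i j *\<^sub>R z n j)"
    and y_upd: "\<forall>n. \<forall>i\<in>{1..I}. y (Suc n) i =
               (\<Sum>j\<in>{1..I}. weight E \<theta> n i j *\<^sub>R y n j) + gf i (x (Suc n) i) - gf i (x n i)"
begin

definition "xbar n = (1 / real I) *\<^sub>R (\<Sum>i\<in>V. x n i)"
definition "F u = (\<Sum>i\<in>V. f i u)"
definition "gradF u = (\<Sum>i\<in>V. gf i u)"
definition "gap n j = norm (xt n j - x n j)"
definition "avg_dir n = (1 / real I) *\<^sub>R (\<Sum>j\<in>V. xt n j - x n j)"
definition "max_gap n = Max (gap n ` V)"
definition "spread_x n = spread V (x n)"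
definition "spread_y n = spread V (y n)"
definition "\<tau>_min = Min (\<tau> ` V)"

lemma one_in_V: "1 \<in> V" using I_pos by simp
lemma I_real: "real I \<ge> 1" using I_pos by simp

lemma \<tau>_min_pos: "\<tau>_min > 0"
  unfolding \<tau>_min_def using V_fin V_ne F1 by (subst Min_gr_iff) auto

lemma \<tau>_min_le: "j \<in> V \<Longrightarrow> \<tau>_min \<le> \<tau> j"
  unfolding \<tau>_min_def using V_fin by simp

lemma \<alpha>_pos: "\<alpha> n > 0" and \<alpha>_le1: "\<alpha> n \<le> 1" using step(1) by auto

lemma LL_nonneg: "LL \<ge> 0" using LLip one_in_V lipschitz_on_nonneg by blast

lemma gf_lip: "i \<in> V \<Longrightarrow> u \<in> K \<Longrightarrow> v \<in> K \<Longrightarrow> norm (gf i u - gf i v) \<le> LL * norm (u - v)"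
  using LLip lipschitz_on_normD by blast

lemma gap_le_max_gap: "j \<in> V \<Longrightarrow> gap n j \<le> max_gap n"
  unfolding max_gap_def using V_fin by simp

lemma gap_nonneg: "gap n j \<ge> 0" unfolding gap_def by simp

lemma max_gap_nonneg: "max_gap n \<ge> 0" using gap_le_max_gap[OF one_in_V, of n] gap_nonneg[of n 1] by simp

lemma spread_x_nonneg: "spread_x n \<ge> 0" and spread_y_nonneg: "spread_y n \<ge> 0"
  unfolding spread_x_def spread_y_def using spread_nonneg[OF V_fin V_ne] by auto

lemma z_in_K_if_x_in_K: "i \<in> V \<Longrightarrow> x n i \<in> K \<Longrightarrow> z n i \<in> K"
proof -
  assume i: "i \<in> V" and x_in_K: "x n i \<in> K"
  have "z n i = (1 - \<alpha> n) *\<^sub>R x n i + \<alpha> n *\<^sub>R xt n i" using z_def i by (simp add: algebra_simps)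
  then show ?thesis using convexD[OF K_convex x_in_K, of "xt n i" "1 - \<alpha> n" "\<alpha> n"] xt_def i \<alpha>_pos \<alpha>_le1
    by (simp add: less_imp_le)
qed

lemma x_in_K: "i \<in> V \<Longrightarrow> x n i \<in> K"
proof (induction n arbitrary: i)
  case 0 then show ?case using init by simp
next
  case (Suc n)
  have "x (Suc n) i = (\<Sum>j\<in>V. w n i j *\<^sub>R z n j)" using x_upd Suc.prems by simp
  moreover have "(\<Sum>j\<in>V. w n i j *\<^sub>R z n j) \<in> K"
    using Suc w_nonneg[OF Suc.prems] w_row[OF Suc.prems] z_in_K_if_x_in_K
    by (intro convex_sum[OF V_fin K_convex]) auto
  ultimately show ?case by simp
qed

lemma xt_in_K: "i \<in> V \<Longrightarrow> xt n i \<in> K" using xt_def by blast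

lemma xbar_in_K: "xbar n \<in> K"
proof -
  have "(\<Sum>i\<in>V. (1 / real I) *\<^sub>R x n i) \<in> K"
    using x_in_K I_pos by (intro convex_sum[OF V_fin K_convex]) (auto simp: V_card)
  then show ?thesis unfolding xbar_def by (simp add: scaleR_sum_right)
qed

lemma sum_mixing:
  fixes u :: "nat \<Rightarrow> 'b::real_vector"
  shows "(\<Sum>i\<in>V. (\<Sum>j\<in>V. w n i j *\<^sub>R u j)) = (\<Sum>j\<in>V. u j)"
proof -
  have "(\<Sum>i\<in>V. (\<Sum>j\<in>V. w n i j *\<^sub>R u j)) = (\<Sum>j\<in>V. (\<Sum>i\<in>V. w n i j) *\<^sub>R u j)"
    by (subst sum.swap) (simp add: scaleR_sum_left)
  also have "\<dots> = (\<Sum>j\<in>V. u j)" using w_col by simp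
  finally show ?thesis .
qed

lemma sum_x_Suc: "(\<Sum>i\<in>V. x (Suc n) i) = (\<Sum>j\<in>V. z n j)"
  using x_upd sum_mixing by simp

lemma sum_y_eq_sum_gradients: "(\<Sum>i\<in>V. y n i) = (\<Sum>i\<in>V. gf i (x n i))"
proof (induction n)
  case 0 then show ?case using init by simp
next
  case (Suc n)
  have "(\<Sum>i\<in>V. y (Suc n) i) = (\<Sum>i\<in>V. (\<Sum>j\<in>V. w n i j *\<^sub>R y n j) + gf i (x (Suc n) i) - gf i (x n i))"
    using y_upd by simp
  also have "\<dots> = (\<Sum>i\<in>V. (\<Sum>j\<in>V. w n i j *\<^sub>R y n j)) + (\<Sum>i\<in>V. gf i (x (Suc n) i)) - (\<Sum>i\<in>V. gf i (x n i))"
    by (simp add: sum.distrib sum_subtractf)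
  also have "\<dots> = (\<Sum>i\<in>V. gf i (x (Suc n) i))" using sum_mixing[of n "y n"] Suc by simp
  finally show ?case .
qed

lemma xbar_Suc: "xbar (Suc n) = xbar n + \<alpha> n *\<^sub>R avg_dir n"
proof -
  have "(\<Sum>j\<in>V. z n j) = (\<Sum>j\<in>V. x n j) + \<alpha> n *\<^sub>R (\<Sum>j\<in>V. xt n j - x n j)"
    using z_def by (simp add: sum.distrib scaleR_sum_right)
  then show ?thesis unfolding xbar_def avg_dir_def sum_x_Suc by (simp add: algebra_simps)
qed

lemma norm_avg_dir_le: "norm (avg_dir n) \<le> max_gap n"
proof -
  have "norm (\<Sum>j\<in>V. xt n j - x n j) \<le> (\<Sum>j\<in>V. norm (xt n j - x n j))" by (rule norm_sum)
  also have "\<dots> \<le> (\<Sum>j\<in>V. max_gap n)" using gap_le_max_gap unfolding gap_def by (intro sum_mono) auto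
  also have "\<dots> = real I * max_gap n" using V_card by simp
  finally show ?thesis using I_pos unfolding avg_dir_def by (simp add: field_simps)
qed

subsection \<open>Length of the best-response steps\<close>

definition "track_err n = real I * spread_y n + real I * LL * spread_x n"
definition "gap_const = 2 * (LG + LF) / \<tau>_min"
definition "gap_slope = 2 * real I * (1 + LL) / \<tau>_min"

lemma LF_nonneg: "LF \<ge> 0"
proof -
  obtain u where "u \<in> K" using K_ne by auto
  then have "norm (\<Sum>i\<in>V. gf i u) \<le> LF" using LFb by blast
  then show ?thesis by (rule order.trans[OF norm_ge_zero])
qed

lemma LG_nonneg: "LG \<ge> 0"
proof -
  obtain u where u: "u \<in> K" using K_ne by auto
  obtain \<xi> where "\<xi> \<in> subdiff G u" using subdiff_nonempty[OF Gconv] by blast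
  then have "norm \<xi> \<le> LG" using LGb u by blast
  then show ?thesis by (rule order.trans[OF norm_ge_zero])
qed

lemma track_err_nonneg: "track_err n \<ge> 0"
  unfolding track_err_def using spread_x_nonneg spread_y_nonneg LL_nonneg by simp

lemma G_diff_le: "u \<in> K \<Longrightarrow> v \<in> K \<Longrightarrow> G u - G v \<le> LG * norm (u - v)"
proof -
  assume u: "u \<in> K" and v: "v \<in> K"
  obtain \<xi> where xi: "\<xi> \<in> subdiff G u" using subdiff_nonempty[OF Gconv] by blast
  have "G v \<ge> G u + \<xi> \<bullet> (v - u)" using xi unfolding subdiff_def by blast
  then have "G u - G v \<le> \<xi> \<bullet> (u - v)" by (simp add: inner_diff_right)
  also have "\<dots> \<le> norm \<xi> * norm (u - v)" by (rule norm_cauchy_schwarz)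
  also have "\<dots> \<le> LG * norm (u - v)" using LGb u xi by (intro mult_right_mono) auto
  finally show ?thesis .
qed

lemma G_best_response_decrease:
  assumes j: "j \<in> V"
  shows "G (xt n j) - G (x n j) \<le> - (\<tau> j / 2) * (gap n j)\<^sup>2 - (real I *\<^sub>R y n j) \<bullet> (xt n j - x n j)"
proof -
  let ?v = "x n j" and ?u = "xt n j"
  define \<phi> where "\<phi> w = ft j w ?v + pit n j \<bullet> (w - ?v) + G w" for w
  have vK: "?v \<in> K" using x_in_K[OF j] .
  have uK: "?u \<in> K" using xt_in_K[OF j] .
  have sc0: "strongly_convex_on K (\<tau> j) (\<lambda>w. ft j w ?v)" using F1 j vK by blast
  have sc: "strongly_convex_on K (\<tau> j) \<phi>" unfolding \<phi>_def by (rule strongly_convex_on_add_affine_convex[OF sc0 Gconv])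
  have opt: "\<forall>w\<in>K. \<phi> ?u \<le> \<phi> w" unfolding \<phi>_def using xt_def j by blast
  have growth: "\<phi> ?v - \<phi> ?u \<ge> \<tau> j / 2 * (norm (?v - ?u))\<^sup>2" by (rule strongly_convex_on_minimizer_growth[OF sc K_convex uK vK opt])
  have der: "((\<lambda>w. ft j w ?v) has_derivative (\<lambda>h. gf j ?v \<bullet> h)) (at ?v within K)"
  proof -
    have "((\<lambda>w. ft j w ?v) has_derivative (\<lambda>h. gft j ?v ?v \<bullet> h)) (at ?v within K)"
      using F_diff j vK by blast
    moreover have "gft j ?v ?v = gf j ?v" using F2 j vK by blast
    ultimately show ?thesis by simp
  qed
  have "ft j ?u ?v \<ge> ft j ?v ?v + gf j ?v \<bullet> (?u - ?v) + \<tau> j / 2 * (norm (?u - ?v))\<^sup>2"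
    by (rule strongly_convex_on_gradient_ineq[OF sc0 der K_convex vK uK])
  moreover have "\<tau> j > 0" using F1 j by blast
  then have "\<tau> j / 2 * (norm (?u - ?v))\<^sup>2 \<ge> 0" by simp
  ultimately have linear: "ft j ?u ?v \<ge> ft j ?v ?v + gf j ?v \<bullet> (?u - ?v)" by linarith
  have pe: "pit n j + gf j ?v = real I *\<^sub>R y n j" using pit_def j by simp
  have nrm: "norm (?v - ?u) = gap n j" unfolding gap_def by (simp add: norm_minus_commute)
  have "G ?v - G ?u \<ge> \<tau> j / 2 * (gap n j)\<^sup>2 + (pit n j + gf j ?v) \<bullet> (?u - ?v)"
    using growth linear nrm unfolding \<phi>_def by (simp add: inner_add_left algebra_simps)
  then show ?thesis using pe by simp
qed

lemma norm_gradF_tracker_le: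
  assumes j: "j \<in> V"
  shows "norm (gradF (xbar n) - real I *\<^sub>R y n j) \<le> track_err n"
proof -
  have cI: "real I > 0" using I_pos by simp
  have sy: "(\<Sum>k\<in>V. y n k) = (\<Sum>k\<in>V. gf k (x n k))" by (rule sum_y_eq_sum_gradients)
  have e1: "real I *\<^sub>R y n j - (\<Sum>k\<in>V. gf k (x n k)) = real I *\<^sub>R (y n j - (1 / real I) *\<^sub>R (\<Sum>k\<in>V. y n k))"
    using cI sy by (simp add: algebra_simps)
  have "norm (y n j - (1 / real I) *\<^sub>R (\<Sum>k\<in>V. y n k)) \<le> spread_y n"
    using norm_diff_mean_le_spread[OF V_fin _ j, of "y n"] V_card I_pos unfolding spread_y_def by simp
  then have n1: "norm (real I *\<^sub>R y n j - (\<Sum>k\<in>V. gf k (x n k))) \<le> real I * spread_y n"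
    unfolding e1 using cI by (simp add: mult_left_mono)
  have "norm ((\<Sum>k\<in>V. gf k (x n k)) - gradF (xbar n)) = norm (\<Sum>k\<in>V. gf k (x n k) - gf k (xbar n))"
    unfolding gradF_def by (simp add: sum_subtractf)
  also have "\<dots> \<le> (\<Sum>k\<in>V. norm (gf k (x n k) - gf k (xbar n)))" by (rule norm_sum)
  also have "\<dots> \<le> (\<Sum>k\<in>V. LL * spread_x n)"
  proof (rule sum_mono)
    fix k assume k: "k \<in> V"
    have "norm (gf k (x n k) - gf k (xbar n)) \<le> LL * norm (x n k - xbar n)" using gf_lip[OF k x_in_K[OF k] xbar_in_K] .
    also have "\<dots> \<le> LL * spread_x n"
      using norm_diff_mean_le_spread[OF V_fin _ k, of "x n"] V_card I_pos LL_nonneg unfolding spread_x_def xbar_def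
      by (intro mult_left_mono) auto
    finally show "norm (gf k (x n k) - gf k (xbar n)) \<le> LL * spread_x n" .
  qed
  also have "\<dots> = real I * LL * spread_x n" using V_card by simp
  finally have n2: "norm ((\<Sum>k\<in>V. gf k (x n k)) - gradF (xbar n)) \<le> real I * LL * spread_x n" .
  have "gradF (xbar n) - real I *\<^sub>R y n j = - (real I *\<^sub>R y n j - (\<Sum>k\<in>V. gf k (x n k))) - ((\<Sum>k\<in>V. gf k (x n k)) - gradF (xbar n))"
    by simp
  then have "norm (gradF (xbar n) - real I *\<^sub>R y n j) \<le> norm (real I *\<^sub>R y n j - (\<Sum>k\<in>V. gf k (x n k))) + norm ((\<Sum>k\<in>V. gf k (x n k)) - gradF (xbar n))"
    by (metis norm_minus_cancel norm_triangle_ineq4)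
  then show ?thesis using n1 n2 unfolding track_err_def by simp
qed

lemma norm_scaled_tracker_le:
  assumes j: "j \<in> V"
  shows "norm (real I *\<^sub>R y n j) \<le> LF + track_err n"
proof -
  have "norm (gradF (xbar n)) \<le> LF" using LFb xbar_in_K unfolding gradF_def by blast
  moreover have "norm (real I *\<^sub>R y n j) \<le> norm (gradF (xbar n)) + norm (gradF (xbar n) - real I *\<^sub>R y n j)"
    by (metis norm_minus_commute norm_triangle_sub)
  ultimately show ?thesis using norm_gradF_tracker_le[OF j, of n] by simp
qed

lemma gap_le:
  assumes j: "j \<in> V"
  shows "gap n j \<le> 2 * (LG + LF + track_err n) / \<tau>_min"
proof -
  let ?d = "gap n j"
  have tj: "\<tau> j > 0" using F1 j by blast
  have k: "G (xt n j) - G (x n j) \<le> - (\<tau> j / 2) * ?d\<^sup>2 - (real I *\<^sub>R y n j) \<bullet> (xt n j - x n j)"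
    by (rule G_best_response_decrease[OF j])
  have gl: "G (x n j) - G (xt n j) \<le> LG * ?d"
    using G_diff_le[OF x_in_K[OF j] xt_in_K[OF j]] unfolding gap_def by (simp add: norm_minus_commute)
  have ip: "- ((real I *\<^sub>R y n j) \<bullet> (xt n j - x n j)) \<le> (LF + track_err n) * ?d"
  proof -
    have "- ((real I *\<^sub>R y n j) \<bullet> (xt n j - x n j)) \<le> norm (real I *\<^sub>R y n j) * norm (xt n j - x n j)"
      by (metis abs_ge_minus_self Cauchy_Schwarz_ineq2 order.trans)
    also have "\<dots> \<le> (LF + track_err n) * ?d" unfolding gap_def using norm_scaled_tracker_le[OF j] by (intro mult_right_mono) auto
    finally show ?thesis .
  qed
  have "\<tau> j / 2 * ?d\<^sup>2 \<le> (LG + LF + track_err n) * ?d" using k gl ip by (simp add: algebra_simps)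
  then have A: "\<tau> j / 2 * ?d * ?d \<le> (LG + LF + track_err n) * ?d" by (simp add: power2_eq_square mult.assoc)
  have B: "\<tau> j / 2 * ?d \<le> LG + LF + track_err n"
  proof (cases "?d = 0")
    case True then show ?thesis using LG_nonneg LF_nonneg track_err_nonneg by simp
  next
    case False then have "?d > 0" using gap_nonneg[of n j] by simp
    then show ?thesis using A by (simp add: mult_le_cancel_right_pos)
  qed
  have "\<tau>_min / 2 * ?d \<le> \<tau> j / 2 * ?d" using \<tau>_min_le[OF j] gap_nonneg[of n j] by (intro mult_right_mono) auto
  then have "\<tau>_min / 2 * ?d \<le> LG + LF + track_err n" using B by simp
  then show ?thesis using \<tau>_min_pos by (simp add: field_simps)
qed

lemma max_gap_le: "max_gap n \<le> gap_const + gap_slope * (spread_x n + spread_y n)"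
proof -
  have e: "track_err n \<le> real I * (1 + LL) * (spread_x n + spread_y n)"
    unfolding track_err_def using spread_x_nonneg[of n] spread_y_nonneg[of n] LL_nonneg I_real
    by (simp add: algebra_simps mult_nonneg_nonneg)
  have "max_gap n \<le> 2 * (LG + LF + track_err n) / \<tau>_min"
    unfolding max_gap_def using V_fin V_ne gap_le by (subst Max_le_iff) auto
  also have "\<dots> \<le> 2 * (LG + LF + real I * (1 + LL) * (spread_x n + spread_y n)) / \<tau>_min"
    using e \<tau>_min_pos by (intro divide_right_mono) auto
  also have "\<dots> = gap_const + gap_slope * (spread_x n + spread_y n)" unfolding gap_const_def gap_slope_def by (simp add: add_divide_distrib[symmetric] algebra_simps)
  finally show ?thesis .
qed

lemma gap_const_nonneg: "gap_const \<ge> 0" unfolding gap_const_def using LG_nonneg LF_nonneg \<tau>_min_pos by simp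
lemma gap_slope_nonneg: "gap_slope \<ge> 0" unfolding gap_slope_def using LL_nonneg \<tau>_min_pos by simp

subsection \<open>Consensus errors\<close>

definition "x_pert t i = \<alpha> t *\<^sub>R (\<Sum>j\<in>V. w t i j *\<^sub>R (xt t j - x t j))"
definition "y_pert t i = gf i (x (Suc t) i) - gf i (x t i)"

lemma norm_mixing_le:
  fixes u :: "nat \<Rightarrow> 'b::real_normed_vector"
  assumes i: "i \<in> V" and b: "\<And>j. j \<in> V \<Longrightarrow> norm (u j) \<le> c"
  shows "norm (\<Sum>j\<in>V. w t i j *\<^sub>R u j) \<le> c"
proof -
  have "norm (\<Sum>j\<in>V. w t i j *\<^sub>R u j) \<le> (\<Sum>j\<in>V. norm (w t i j *\<^sub>R u j))" by (rule norm_sum)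
  also have "\<dots> = (\<Sum>j\<in>V. w t i j * norm (u j))" using w_nonneg[OF i] by (intro sum.cong) auto
  also have "\<dots> \<le> (\<Sum>j\<in>V. w t i j * c)" by (rule sum_w_le[OF i b])
  also have "\<dots> = c" by (rule sum_w_const[OF i])
  finally show ?thesis .
qed

lemma x_perturbed_mixing: "\<forall>t. \<forall>i\<in>V. x (Suc t) i = (\<Sum>j\<in>V. w t i j *\<^sub>R x t j) + x_pert t i"
proof (intro allI ballI)
  fix t i assume i: "i \<in> V"
  have "x (Suc t) i = (\<Sum>j\<in>V. w t i j *\<^sub>R (x t j + \<alpha> t *\<^sub>R (xt t j - x t j)))"
    using x_upd z_def i by simp
  also have "\<dots> = (\<Sum>j\<in>V. w t i j *\<^sub>R x t j) + x_pert t i"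
    unfolding x_pert_def by (simp add: scaleR_add_right sum.distrib scaleR_sum_right mult.commute)
  finally show "x (Suc t) i = (\<Sum>j\<in>V. w t i j *\<^sub>R x t j) + x_pert t i" .
qed

lemma norm_x_pert_le: "\<forall>t. \<forall>i\<in>V. norm (x_pert t i) \<le> \<alpha> t * max_gap t"
proof (intro allI ballI)
  fix t i assume i: "i \<in> V"
  have "norm (\<Sum>j\<in>V. w t i j *\<^sub>R (xt t j - x t j)) \<le> max_gap t"
    by (rule norm_mixing_le[OF i]) (use gap_le_max_gap in \<open>auto simp: gap_def\<close>)
  then show "norm (x_pert t i) \<le> \<alpha> t * max_gap t" unfolding x_pert_def using \<alpha>_pos[of t]
    by (simp add: mult_left_mono)
qed

lemma norm_x_Suc_diff_le: "i \<in> V \<Longrightarrow> norm (x (Suc t) i - x t i) \<le> spread_x t + \<alpha> t * max_gap t"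
proof -
  assume i: "i \<in> V"
  have "x (Suc t) i - x t i = (\<Sum>j\<in>V. w t i j *\<^sub>R x t j) - (\<Sum>j\<in>V. w t i j) *\<^sub>R x t i + x_pert t i"
    using x_perturbed_mixing w_row[OF i] i by simp
  also have "\<dots> = (\<Sum>j\<in>V. w t i j *\<^sub>R (x t j - x t i)) + x_pert t i"
    by (simp add: scaleR_diff_right sum_subtractf scaleR_sum_left)
  finally have eq: "x (Suc t) i - x t i = (\<Sum>j\<in>V. w t i j *\<^sub>R (x t j - x t i)) + x_pert t i" .
  have "norm (\<Sum>j\<in>V. w t i j *\<^sub>R (x t j - x t i)) \<le> spread_x t"
    by (rule norm_mixing_le[OF i]) (use norm_diff_le_spread[OF V_fin _ i] in \<open>auto simp: spread_x_def\<close>)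
  then show ?thesis unfolding eq using norm_x_pert_le i by (smt (verit) norm_triangle_ineq)
qed

lemma y_perturbed_mixing: "\<forall>t. \<forall>i\<in>V. y (Suc t) i = (\<Sum>j\<in>V. w t i j *\<^sub>R y t j) + y_pert t i"
  using y_upd unfolding y_pert_def by simp

lemma norm_y_pert_le: "\<forall>t. \<forall>i\<in>V. norm (y_pert t i) \<le> LL * (spread_x t + \<alpha> t * max_gap t)"
proof (intro allI ballI)
  fix t i assume i: "i \<in> V"
  have "norm (y_pert t i) \<le> LL * norm (x (Suc t) i - x t i)" unfolding y_pert_def by (rule gf_lip[OF i x_in_K[OF i] x_in_K[OF i]])
  also have "\<dots> \<le> LL * (spread_x t + \<alpha> t * max_gap t)" using norm_x_Suc_diff_le[OF i] LL_nonneg by (rule mult_left_mono)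
  finally show "norm (y_pert t i) \<le> LL * (spread_x t + \<alpha> t * max_gap t)" .
qed

lemma spread_x_Suc: "spread_x (Suc t) \<le> spread_x t + 2 * (\<alpha> t * max_gap t)"
  unfolding spread_x_def by (rule spread_step[OF x_perturbed_mixing norm_x_pert_le])

lemma spread_y_Suc: "spread_y (Suc t) \<le> spread_y t + 2 * (LL * (spread_x t + \<alpha> t * max_gap t))"
  unfolding spread_y_def by (rule spread_step[OF y_perturbed_mixing norm_y_pert_le])

lemma spread_x_window: "spread_x (k * B + I * B) \<le> (1 - \<theta>\<^sub>0 ^ (I * B)) * spread_x (k * B) + 2 * (\<Sum>t\<in>{k * B..<k * B + I * B}. \<alpha> t * max_gap t)"
  unfolding spread_x_def by (rule spread_window_contraction[OF x_perturbed_mixing norm_x_pert_le])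

lemma spread_y_window: "spread_y (k * B + I * B) \<le> (1 - \<theta>\<^sub>0 ^ (I * B)) * spread_y (k * B) + 2 * (\<Sum>t\<in>{k * B..<k * B + I * B}. LL * (spread_x t + \<alpha> t * max_gap t))"
  unfolding spread_y_def by (rule spread_window_contraction[OF y_perturbed_mixing norm_y_pert_le])

subsection \<open>Estimates over windows of \<open>I B\<close> steps\<close>

definition "P = I * B"
definition "\<gamma> = \<theta>\<^sub>0 ^ (I * B)"
definition "window k = {k * P..<k * P + P}"
definition "\<alpha>w k = Max (\<alpha> ` window k)"
definition "Q n = spread_x n + spread_y n"
definition "c1 = 1 + 2 * LL + 2 * (1 + LL) * gap_slope"
definition "c2 = 2 * (1 + LL) * gap_const"
definition "K1 = c1 ^ P * (1 + real P * c2)"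
definition "Mw k = gap_const + gap_slope * K1 * (Q (k * P) + \<alpha>w k)"
definition "X k = spread_x (k * P)"
definition "Y k = spread_y (k * P)"
definition "Cm = gap_const + gap_slope * K1"

lemma P_pos: "P > 0" unfolding P_def using I_pos B1 by simp

lemma finite_window: "finite (window k)" and window_nonempty: "window k \<noteq> {}"
  unfolding window_def using P_pos by auto

lemma in_window: "m < P \<Longrightarrow> k * P + m \<in> window k" unfolding window_def by simp

lemma \<alpha>_le_\<alpha>w: "t \<in> window k \<Longrightarrow> \<alpha> t \<le> \<alpha>w k"
  unfolding \<alpha>w_def using finite_window by simp

lemma \<alpha>w_attained: "\<exists>t\<in>window k. \<alpha>w k = \<alpha> t"
proof -
  have "\<alpha>w k \<in> \<alpha> ` window k" unfolding \<alpha>w_def using finite_window window_nonempty by (intro Max_in) auto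
  then show ?thesis by auto
qed

lemma \<alpha>w_pos: "\<alpha>w k > 0" and \<alpha>w_le_1: "\<alpha>w k \<le> 1"
  using \<alpha>w_attained[of k] \<alpha>_pos \<alpha>_le1 by auto

lemma \<alpha>w_square_le: "(\<alpha>w k)\<^sup>2 \<le> (\<Sum>t\<in>window k. (\<alpha> t)\<^sup>2)"
proof -
  obtain t where t: "t \<in> window k" "\<alpha>w k = \<alpha> t" using \<alpha>w_attained by blast
  have "(\<alpha> t)\<^sup>2 \<le> (\<Sum>t\<in>window k. (\<alpha> t)\<^sup>2)" using t(1) finite_window by (intro member_le_sum) auto
  then show ?thesis using t(2) by simp
qed

lemma summable_\<alpha>w_square: "summable (\<lambda>k. (\<alpha>w k)\<^sup>2)"
proof -
  have "summable (\<lambda>k. \<Sum>n\<in>{k * P..<k * P + P}. (\<alpha> n)\<^sup>2)"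
    using sums_group[OF summable_sums[OF step(3)] P_pos] by (rule sums_summable)
  then show ?thesis
    by (rule summable_comparison_test'[where N = 0]) (use \<alpha>w_square_le in \<open>auto simp: window_def\<close>)
qed

lemma \<alpha>w_tendsto_0: "\<alpha>w \<longlonglongrightarrow> 0"
  by (rule LIMSEQ_zero_of_square[OF summable_LIMSEQ_zero[OF summable_\<alpha>w_square]])

lemma \<alpha>_tendsto_0: "\<alpha> \<longlonglongrightarrow> 0"
  by (rule LIMSEQ_zero_of_square[OF summable_LIMSEQ_zero[OF step(3)]])

lemma Q_nonneg: "Q n \<ge> 0" unfolding Q_def using spread_x_nonneg spread_y_nonneg by (simp add: add_nonneg_nonneg)

lemma c1_ge1: "c1 \<ge> 1" unfolding c1_def using LL_nonneg gap_slope_nonneg by simp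
lemma c2_nonneg: "c2 \<ge> 0" unfolding c2_def using LL_nonneg gap_const_nonneg by simp
lemma K1_nonneg: "K1 \<ge> 0" unfolding K1_def using c1_ge1 c2_nonneg by simp

text \<open>Within one window the spreads grow at most geometrically, so the gaps inside window
  \<open>k\<close> are bounded by \<open>Mw k\<close>, an affine function of the spreads at its start.\<close>

lemma Q_Suc: "Q (Suc t) \<le> c1 * Q t + c2 * \<alpha> t"
proof -
  have aM: "\<alpha> t * max_gap t \<le> \<alpha> t * gap_const + gap_slope * Q t"
  proof -
    have "\<alpha> t * max_gap t \<le> \<alpha> t * (gap_const + gap_slope * Q t)" using max_gap_le[of t] \<alpha>_pos[of t] unfolding Q_def
      by (intro mult_left_mono) auto
    also have "\<dots> = \<alpha> t * gap_const + \<alpha> t * (gap_slope * Q t)" by (simp add: algebra_simps)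
    also have "\<alpha> t * (gap_slope * Q t) \<le> 1 * (gap_slope * Q t)"
      using \<alpha>_le1[of t] gap_slope_nonneg Q_nonneg[of t] by (intro mult_right_mono) auto
    finally show ?thesis by simp
  qed
  have dxQ: "spread_x t \<le> Q t" unfolding Q_def using spread_y_nonneg by simp
  have "Q (Suc t) \<le> Q t + 2 * (\<alpha> t * max_gap t) + 2 * (LL * (spread_x t + \<alpha> t * max_gap t))"
    unfolding Q_def using spread_x_Suc[of t] spread_y_Suc[of t] by simp
  also have "\<dots> = Q t + 2 * LL * spread_x t + 2 * (1 + LL) * (\<alpha> t * max_gap t)" by (simp add: algebra_simps)
  also have "\<dots> \<le> Q t + 2 * LL * Q t + 2 * (1 + LL) * (\<alpha> t * gap_const + gap_slope * Q t)"
    using aM dxQ LL_nonneg by (intro add_mono mult_left_mono) auto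
  also have "\<dots> = c1 * Q t + c2 * \<alpha> t" unfolding c1_def c2_def by (simp add: algebra_simps)
  finally show ?thesis .
qed

lemma Q_in_window_power: "m \<le> P \<Longrightarrow> Q (k * P + m) \<le> c1 ^ m * (Q (k * P) + real m * c2 * \<alpha>w k)"
proof (induction m)
  case 0 then show ?case by simp
next
  case (Suc m)
  have m: "m < P" "m \<le> P" using Suc.prems by auto
  have at: "\<alpha> (k * P + m) \<le> \<alpha>w k" by (rule \<alpha>_le_\<alpha>w[OF in_window[OF m(1)]])
  have IH: "Q (k * P + m) \<le> c1 ^ m * (Q (k * P) + real m * c2 * \<alpha>w k)" using Suc.IH m(2) .
  have "Q (k * P + Suc m) \<le> c1 * Q (k * P + m) + c2 * \<alpha> (k * P + m)" using Q_Suc by simp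
  also have "\<dots> \<le> c1 * (c1 ^ m * (Q (k * P) + real m * c2 * \<alpha>w k)) + c2 * \<alpha>w k"
    using IH at c1_ge1 c2_nonneg by (intro add_mono mult_left_mono) auto
  also have "c2 * \<alpha>w k \<le> c1 ^ Suc m * (c2 * \<alpha>w k)"
  proof -
    have "1 \<le> c1 ^ Suc m" using c1_ge1 by (rule one_le_power)
    moreover have "c2 * \<alpha>w k \<ge> 0" using c2_nonneg \<alpha>w_pos[of k] by simp
    ultimately have "1 * (c2 * \<alpha>w k) \<le> c1 ^ Suc m * (c2 * \<alpha>w k)" by (rule mult_right_mono)
    then show ?thesis by simp
  qed
  finally show ?case by (simp add: algebra_simps)
qed

lemma Q_in_window: "m \<le> P \<Longrightarrow> Q (k * P + m) \<le> K1 * (Q (k * P) + \<alpha>w k)"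
proof -
  assume m: "m \<le> P"
  have 1: "c1 ^ m \<le> c1 ^ P" using m c1_ge1 by (rule power_increasing)
  have 2: "Q (k * P) + real m * c2 * \<alpha>w k \<le> (1 + real P * c2) * (Q (k * P) + \<alpha>w k)"
  proof -
    have "real m * c2 * \<alpha>w k \<le> real P * c2 * \<alpha>w k" using m c2_nonneg \<alpha>w_pos[of k]
      by (intro mult_right_mono) (auto simp: less_imp_le)
    moreover have "real P * c2 * Q (k * P) \<ge> 0" using c2_nonneg Q_nonneg by simp
    moreover have "\<alpha>w k \<ge> 0" using \<alpha>w_pos[of k] by simp
    moreover have "(1 + real P * c2) * (Q (k * P) + \<alpha>w k) = Q (k * P) + \<alpha>w k + real P * c2 * Q (k * P) + real P * c2 * \<alpha>w k"
      by (simp add: algebra_simps)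
    ultimately show ?thesis by linarith
  qed
  have "Q (k * P + m) \<le> c1 ^ m * (Q (k * P) + real m * c2 * \<alpha>w k)" by (rule Q_in_window_power[OF m])
  also have "\<dots> \<le> c1 ^ P * ((1 + real P * c2) * (Q (k * P) + \<alpha>w k))"
    using 1 2 c1_ge1 c2_nonneg Q_nonneg \<alpha>w_pos[of k]
    by (intro mult_mono) (auto intro!: add_nonneg_nonneg mult_nonneg_nonneg simp: less_imp_le)
  finally show ?thesis unfolding K1_def by (simp add: mult.assoc)
qed

lemma max_gap_in_window: "m \<le> P \<Longrightarrow> max_gap (k * P + m) \<le> Mw k"
proof -
  assume m: "m \<le> P"
  have "max_gap (k * P + m) \<le> gap_const + gap_slope * Q (k * P + m)" using max_gap_le unfolding Q_def by simp
  also have "\<dots> \<le> gap_const + gap_slope * (K1 * (Q (k * P) + \<alpha>w k))" using Q_in_window[OF m] gap_slope_nonneg by (intro add_left_mono mult_left_mono) auto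
  finally show ?thesis unfolding Mw_def by (simp add: mult.assoc)
qed

lemma spread_x_in_window: "m \<le> P \<Longrightarrow> spread_x (k * P + m) \<le> spread_x (k * P) + 2 * real m * \<alpha>w k * Mw k"
proof (induction m)
  case 0 then show ?case by simp
next
  case (Suc m)
  have m: "m < P" "m \<le> P" using Suc.prems by auto
  have at: "\<alpha> (k * P + m) \<le> \<alpha>w k" by (rule \<alpha>_le_\<alpha>w[OF in_window[OF m(1)]])
  have "\<alpha> (k * P + m) * max_gap (k * P + m) \<le> \<alpha>w k * Mw k"
    using at max_gap_in_window[OF m(2)] \<alpha>_pos max_gap_nonneg \<alpha>w_pos[of k] by (intro mult_mono) (auto simp: less_imp_le)
  then show ?case using spread_x_Suc[of "k * P + m"] Suc.IH[OF m(2)] by (simp add: algebra_simps)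
qed

subsection \<open>Square summability of the consensus errors\<close>

definition "cc = 2 * real P * Cm * (1 + LL * (2 * real P + 1))"
definition "cc' = 2 * real P * LL"

lemma Cm_nonneg: "Cm \<ge> 0" unfolding Cm_def using gap_const_nonneg gap_slope_nonneg K1_nonneg by simp

lemma \<gamma>_bounds: "0 < \<gamma>" "\<gamma> \<le> 1"
  unfolding \<gamma>_def using theta0_range by (auto intro: power_le_one)

lemma window_decomp: "t \<in> window k \<Longrightarrow> t = k * P + (t - k * P) \<and> t - k * P < P"
  unfolding window_def by auto

lemma max_gap_window: "t \<in> window k \<Longrightarrow> max_gap t \<le> Mw k"
  using max_gap_in_window[of "t - k * P" k] window_decomp[of t k] by (metis less_imp_le)

lemma spread_x_window_le: "t \<in> window k \<Longrightarrow> spread_x t \<le> X k + 2 * real P * \<alpha>w k * Mw k"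
proof -
  assume t: "t \<in> window k"
  let ?m = "t - k * P"
  have m: "?m \<le> P" "t = k * P + ?m" using window_decomp[OF t] by auto
  have Mw0: "Mw k \<ge> 0" using max_gap_window[OF t] max_gap_nonneg[of t] by simp
  have 1: "spread_x t \<le> spread_x (k * P) + 2 * real ?m * \<alpha>w k * Mw k" using spread_x_in_window[OF m(1), of k] m(2) by simp
  have 2: "real ?m * (\<alpha>w k * Mw k) \<le> real P * (\<alpha>w k * Mw k)"
    using m(1) \<alpha>w_pos[of k] Mw0 by (intro mult_right_mono) auto
  have 3: "2 * real ?m * \<alpha>w k * Mw k = 2 * (real ?m * (\<alpha>w k * Mw k))" "2 * real P * \<alpha>w k * Mw k = 2 * (real P * (\<alpha>w k * Mw k))"
    by simp_all
  show ?thesis unfolding X_def using 1 2 3 by linarith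
qed

lemma \<alpha>_max_gap_window: "t \<in> window k \<Longrightarrow> \<alpha> t * max_gap t \<le> \<alpha>w k * Mw k"
  using \<alpha>_le_\<alpha>w[of t k] max_gap_window[of t k] \<alpha>_pos[of t] max_gap_nonneg[of t] by (intro mult_mono) auto

lemma card_window: "card (window k) = P" unfolding window_def by simp

lemma window_as_B_blocks:
  "{k * I * B..<k * I * B + I * B} = window k" "k * I * B + I * B = Suc k * P" "k * I * B = k * P"
  unfolding window_def P_def by (simp_all add: algebra_simps)

lemma X_Suc: "X (Suc k) \<le> (1 - \<gamma>) * X k + 2 * real P * (\<alpha>w k * Mw k)"
proof -
  have "spread_x (Suc k * P) \<le> (1 - \<gamma>) * spread_x (k * P) + 2 * (\<Sum>t\<in>window k. \<alpha> t * max_gap t)"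
    using spread_x_window[of "k * I", unfolded window_as_B_blocks(1), unfolded window_as_B_blocks(2), unfolded window_as_B_blocks(3)] unfolding \<gamma>_def .
  moreover have "(\<Sum>t\<in>window k. \<alpha> t * max_gap t) \<le> (\<Sum>t\<in>window k. \<alpha>w k * Mw k)" by (rule sum_mono) (rule \<alpha>_max_gap_window)
  moreover have "(\<Sum>t\<in>window k. \<alpha>w k * Mw k) = real P * (\<alpha>w k * Mw k)" by (simp add: card_window)
  ultimately show ?thesis unfolding X_def by linarith
qed

lemma Y_Suc: "Y (Suc k) \<le> (1 - \<gamma>) * Y k + 2 * real P * LL * (X k + (2 * real P + 1) * (\<alpha>w k * Mw k))"
proof -
  have "spread_y (Suc k * P) \<le> (1 - \<gamma>) * spread_y (k * P) + 2 * (\<Sum>t\<in>window k. LL * (spread_x t + \<alpha> t * max_gap t))"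
    using spread_y_window[of "k * I", unfolded window_as_B_blocks(1), unfolded window_as_B_blocks(2), unfolded window_as_B_blocks(3)] unfolding \<gamma>_def .
  moreover have "(\<Sum>t\<in>window k. LL * (spread_x t + \<alpha> t * max_gap t)) \<le> (\<Sum>t\<in>window k. LL * (X k + (2 * real P + 1) * (\<alpha>w k * Mw k)))"
  proof (rule sum_mono)
    fix t assume t: "t \<in> window k"
    have "spread_x t + \<alpha> t * max_gap t \<le> X k + 2 * real P * \<alpha>w k * Mw k + \<alpha>w k * Mw k"
      using spread_x_window_le[OF t] \<alpha>_max_gap_window[OF t] by simp
    also have "\<dots> = X k + (2 * real P + 1) * (\<alpha>w k * Mw k)" by (simp add: algebra_simps)
    finally show "LL * (spread_x t + \<alpha> t * max_gap t) \<le> LL * (X k + (2 * real P + 1) * (\<alpha>w k * Mw k))"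
      using LL_nonneg by (rule mult_left_mono)
  qed
  moreover have "(\<Sum>t\<in>window k. LL * (X k + (2 * real P + 1) * (\<alpha>w k * Mw k))) = real P * (LL * (X k + (2 * real P + 1) * (\<alpha>w k * Mw k)))"
    by (simp add: card_window)
  moreover have "2 * (real P * (LL * (X k + (2 * real P + 1) * (\<alpha>w k * Mw k)))) = 2 * real P * LL * (X k + (2 * real P + 1) * (\<alpha>w k * Mw k))"
    by simp
  ultimately show ?thesis unfolding Y_def by linarith
qed

lemma X_nonneg: "X k \<ge> 0" and Y_nonneg: "Y k \<ge> 0"
  unfolding X_def Y_def using spread_x_nonneg spread_y_nonneg by auto

lemma \<alpha>w_Mw_le: "\<alpha>w k * Mw k \<le> Cm * (\<alpha>w k * (1 + X k + Y k))"
proof -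
  have Q: "Q (k * P) = X k + Y k" unfolding Q_def X_def Y_def by simp
  have "Mw k = gap_const + gap_slope * K1 * (X k + Y k + \<alpha>w k)" unfolding Mw_def Q by simp
  also have "\<dots> \<le> gap_const * (1 + X k + Y k) + gap_slope * K1 * (1 + X k + Y k)"
  proof -
    have "gap_const \<le> gap_const * (1 + X k + Y k)" using gap_const_nonneg X_nonneg[of k] Y_nonneg[of k]
      by (simp add: algebra_simps mult_nonneg_nonneg)
    moreover have "gap_slope * K1 * (X k + Y k + \<alpha>w k) \<le> gap_slope * K1 * (1 + X k + Y k)"
      using \<alpha>w_le_1[of k] gap_slope_nonneg K1_nonneg by (intro mult_left_mono) auto
    ultimately show ?thesis by simp
  qed
  also have "\<dots> = Cm * (1 + X k + Y k)" unfolding Cm_def by (simp add: algebra_simps)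
  finally have "Mw k \<le> Cm * (1 + X k + Y k)" .
  then have "\<alpha>w k * Mw k \<le> \<alpha>w k * (Cm * (1 + X k + Y k))" using \<alpha>w_pos[of k] by (intro mult_left_mono) auto
  then show ?thesis by (simp add: algebra_simps)
qed

lemma summable_XY_square: "summable (\<lambda>k. (X k + Y k)\<^sup>2)"
proof (rule summable_square_of_coupled_recurrence[OF X_nonneg Y_nonneg _ \<gamma>_bounds])
  show "\<And>k. 0 \<le> \<alpha>w k" using \<alpha>w_pos by (simp add: less_imp_le)
  show "0 \<le> cc" unfolding cc_def using Cm_nonneg LL_nonneg by simp
  show "0 \<le> cc'" unfolding cc'_def using LL_nonneg by simp
  show "\<alpha>w \<longlonglongrightarrow> 0" by (rule \<alpha>w_tendsto_0)
  show "summable (\<lambda>k. (\<alpha>w k)\<^sup>2)" by (rule summable_\<alpha>w_square)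
  fix k
  define W where "W = \<alpha>w k * (1 + X k + Y k)"
  have W0: "W \<ge> 0" unfolding W_def using \<alpha>w_pos[of k] X_nonneg[of k] Y_nonneg[of k] by simp
  have am: "\<alpha>w k * Mw k \<le> Cm * W" unfolding W_def by (rule \<alpha>w_Mw_le)
  have ccW: "cc * \<alpha>w k * (1 + X k + Y k) = cc * W" unfolding W_def by (simp only: mult.assoc)
  have "2 * real P * (\<alpha>w k * Mw k) \<le> 2 * real P * (Cm * W)" using am by (intro mult_left_mono) auto
  also have "\<dots> \<le> cc * W"
  proof -
    have "2 * real P * Cm * 1 \<le> 2 * real P * Cm * (1 + LL * (2 * real P + 1))"
      using Cm_nonneg LL_nonneg by (intro mult_left_mono) auto
    then have "2 * real P * Cm \<le> cc" unfolding cc_def by simp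
    then have "2 * real P * Cm * W \<le> cc * W" using W0 by (rule mult_right_mono)
    then show ?thesis by (simp add: mult.assoc)
  qed
  finally show "X (Suc k) \<le> (1 - \<gamma>) * X k + cc * \<alpha>w k * (1 + X k + Y k)" using X_Suc[of k] ccW by linarith
  have "2 * real P * LL * ((2 * real P + 1) * (\<alpha>w k * Mw k)) \<le> 2 * real P * LL * ((2 * real P + 1) * (Cm * W))"
    using am LL_nonneg by (intro mult_left_mono) auto
  also have "\<dots> \<le> cc * W"
  proof -
    have "2 * real P * LL * ((2 * real P + 1) * Cm) \<le> cc"
      unfolding cc_def using Cm_nonneg LL_nonneg by (simp add: algebra_simps mult_nonneg_nonneg)
    then have "2 * real P * LL * ((2 * real P + 1) * Cm) * W \<le> cc * W" using W0 by (rule mult_right_mono)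
    then show ?thesis by (simp add: algebra_simps)
  qed
  finally have "2 * real P * LL * ((2 * real P + 1) * (\<alpha>w k * Mw k)) \<le> cc * W" .
  then show "Y (Suc k) \<le> (1 - \<gamma>) * Y k + cc' * X k + cc * \<alpha>w k * (1 + X k + Y k)"
  proof -
    have "2 * real P * LL * (X k + (2 * real P + 1) * (\<alpha>w k * Mw k)) = cc' * X k + 2 * real P * LL * ((2 * real P + 1) * (\<alpha>w k * Mw k))"
      unfolding cc'_def by (simp add: algebra_simps)
    then show ?thesis using Y_Suc[of k] ccW \<open>2 * real P * LL * ((2 * real P + 1) * (\<alpha>w k * Mw k)) \<le> cc * W\<close> by linarith
  qed
qed

lemma XY_tendsto_0: "(\<lambda>k. X k + Y k) \<longlonglongrightarrow> 0"
  by (rule LIMSEQ_zero_of_square[OF summable_LIMSEQ_zero[OF summable_XY_square]])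

lemma XY_bounded: "\<exists>Qb. \<forall>k. X k + Y k \<le> Qb"
proof -
  have "Bseq (\<lambda>k. X k + Y k)" using XY_tendsto_0 by (intro convergent_imp_Bseq convergentI)
  then obtain Kb where Kb: "\<forall>k. norm (X k + Y k) \<le> Kb" unfolding Bseq_def by blast
  have "\<forall>k. X k + Y k \<le> Kb"
  proof
    fix k have "X k + Y k \<le> norm (X k + Y k)" by simp
    then show "X k + Y k \<le> Kb" using Kb by (meson order_trans)
  qed
  then show ?thesis by blast
qed

lemma Q_le_window_start: "Q n \<le> K1 * ((X (n div P) + Y (n div P)) + \<alpha>w (n div P))"
proof -
  have n: "n = (n div P) * P + n mod P" using mod_div_mult_eq[of n P] by simp
  have m: "n mod P \<le> P" using P_pos by (simp add: less_imp_le)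
  have "Q ((n div P) * P + n mod P) \<le> K1 * (Q ((n div P) * P) + \<alpha>w (n div P))" by (rule Q_in_window[OF m])
  then show ?thesis using n unfolding Q_def X_def Y_def by simp
qed

definition "Qmax = K1 * ((SOME Qb. \<forall>k. X k + Y k \<le> Qb) + 1)"

lemma Q_le_Qmax: "Q n \<le> Qmax"
proof -
  define Qb where "Qb = (SOME Qb. \<forall>k. X k + Y k \<le> Qb)"
  have Qb: "\<forall>k. X k + Y k \<le> Qb" unfolding Qb_def using XY_bounded by (rule someI_ex)
  have "Q n \<le> K1 * ((X (n div P) + Y (n div P)) + \<alpha>w (n div P))" by (rule Q_le_window_start)
  also have "\<dots> \<le> K1 * (Qb + 1)" using Qb \<alpha>w_le_1 K1_nonneg by (intro mult_left_mono add_mono) auto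
  finally show ?thesis unfolding Qmax_def Qb_def .
qed

lemma Q_tendsto_0: "Q \<longlonglongrightarrow> 0"
proof (rule tendsto_sandwich[where f = "\<lambda>n. 0" and h = "\<lambda>n. K1 * ((X (n div P) + Y (n div P)) + \<alpha>w (n div P))"])
  show "\<forall>\<^sub>F n in sequentially. 0 \<le> Q n" using Q_nonneg by simp
  show "\<forall>\<^sub>F n in sequentially. Q n \<le> K1 * ((X (n div P) + Y (n div P)) + \<alpha>w (n div P))" using Q_le_window_start by simp
  show "(\<lambda>n. 0) \<longlonglongrightarrow> (0::real)" by simp
  have "(\<lambda>k. (X k + Y k) + \<alpha>w k) \<longlonglongrightarrow> 0 + 0" using XY_tendsto_0 \<alpha>w_tendsto_0 by (rule tendsto_add)
  then have "(\<lambda>k. (X k + Y k) + \<alpha>w k) \<longlonglongrightarrow> 0" by simp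
  then have "(\<lambda>n. (X (n div P) + Y (n div P)) + \<alpha>w (n div P)) \<longlonglongrightarrow> 0" by (rule filterlim_compose[OF _ filterlim_at_top_div_const_nat[OF P_pos]])
  then have "(\<lambda>n. K1 * ((X (n div P) + Y (n div P)) + \<alpha>w (n div P))) \<longlonglongrightarrow> K1 * 0" by (rule tendsto_mult_left)
  then show "(\<lambda>n. K1 * ((X (n div P) + Y (n div P)) + \<alpha>w (n div P))) \<longlonglongrightarrow> 0" by simp
qed

lemma spread_x_tendsto_0: "spread_x \<longlonglongrightarrow> 0"
proof (rule tendsto_sandwich[where f = "\<lambda>n. 0" and h = Q])
  show "\<forall>\<^sub>F n in sequentially. 0 \<le> spread_x n" using spread_x_nonneg by simp
  show "\<forall>\<^sub>F n in sequentially. spread_x n \<le> Q n" unfolding Q_def using spread_y_nonneg by simp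
qed (auto simp: Q_tendsto_0)

definition "Mbnd = gap_const + gap_slope * Qmax"

lemma max_gap_le_Mbnd: "max_gap n \<le> Mbnd"
proof -
  have "max_gap n \<le> gap_const + gap_slope * Q n" using max_gap_le unfolding Q_def by simp
  also have "\<dots> \<le> gap_const + gap_slope * Qmax" using Q_le_Qmax gap_slope_nonneg by (intro add_left_mono mult_left_mono) auto
  finally show ?thesis unfolding Mbnd_def .
qed

lemma Mbnd_nonneg: "Mbnd \<ge> 0" using max_gap_le_Mbnd[of 0] max_gap_nonneg[of 0] by simp

lemma summable_\<alpha>_Q: "summable (\<lambda>n. \<alpha> n * Q n)"
proof (rule summable_of_block_majorant[OF _ _ P_pos])
  define \<beta> where "\<beta> k = K1 * ((\<alpha>w k)\<^sup>2 + ((\<alpha>w k)\<^sup>2 + (X k + Y k)\<^sup>2) / 2)" for k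
  show "\<And>n. 0 \<le> \<alpha> n * Q n" using \<alpha>_pos Q_nonneg by (simp add: less_imp_le)
  show "summable \<beta>" unfolding \<beta>_def
    by (intro summable_mult summable_add summable_divide summable_\<alpha>w_square summable_XY_square)
  fix n
  let ?k = "n div P"
  have nb: "n \<in> window ?k"
  proof -
    have e: "?k * P + n mod P = n" using mod_div_mult_eq[of n P] by simp
    have "n mod P < P" using P_pos by simp
    then have "?k * P \<le> n" "n < ?k * P + P" using e by linarith+
    then show ?thesis unfolding window_def by simp
  qed
  have a: "\<alpha> n \<le> \<alpha>w ?k" by (rule \<alpha>_le_\<alpha>w[OF nb])
  have "\<alpha> n * Q n \<le> \<alpha>w ?k * (K1 * ((X ?k + Y ?k) + \<alpha>w ?k))"
    using a Q_le_window_start[of n] \<alpha>_pos[of n] Q_nonneg[of n] \<alpha>w_pos by (intro mult_mono) (auto simp: less_imp_le)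
  also have "\<dots> = K1 * ((\<alpha>w ?k)\<^sup>2 + \<alpha>w ?k * (X ?k + Y ?k))" by (simp add: algebra_simps power2_eq_square)
  also have "\<dots> \<le> \<beta> ?k" unfolding \<beta>_def
  proof (intro mult_left_mono add_left_mono K1_nonneg)
    have "0 \<le> (\<alpha>w ?k - (X ?k + Y ?k))\<^sup>2" by simp
    then show "\<alpha>w ?k * (X ?k + Y ?k) \<le> ((\<alpha>w ?k)\<^sup>2 + (X ?k + Y ?k)\<^sup>2) / 2"
      by (simp add: power2_eq_square algebra_simps)
  qed
  finally show "\<alpha> n * Q n \<le> \<beta> (n div P)" .
qed

subsection \<open>Descent of the merit function\<close>

definition "\<Phi> n = F (xbar n) + (1 / real I) * (\<Sum>i\<in>V. G (x n i))"

lemma F_has_derivative: "u \<in> S \<Longrightarrow> (F has_derivative (\<lambda>h. gradF u \<bullet> h)) (at u)"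
proof -
  assume u: "u \<in> S"
  have "((\<lambda>v. \<Sum>i\<in>V. f i v) has_derivative (\<lambda>h. \<Sum>i\<in>V. gf i u \<bullet> h)) (at u)"
    using fder u by (intro has_derivative_sum) auto
  moreover have "(\<lambda>h. \<Sum>i\<in>V. gf i u \<bullet> h) = (\<lambda>h. gradF u \<bullet> h)" unfolding gradF_def by (simp add: inner_sum_left)
  ultimately show ?thesis unfolding F_def by simp
qed

lemma F_has_derivative_within: "u \<in> K \<Longrightarrow> (F has_derivative (\<lambda>h. gradF u \<bullet> h)) (at u within T)"
  using F_has_derivative Sopen(2) by (blast intro: has_derivative_at_withinI)

lemma gradF_lipschitz: "u \<in> K \<Longrightarrow> v \<in> K \<Longrightarrow> norm (gradF u - gradF v) \<le> real I * LL * norm (u - v)"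
proof -
  assume u: "u \<in> K" and v: "v \<in> K"
  have "norm (gradF u - gradF v) = norm (\<Sum>i\<in>V. gf i u - gf i v)" unfolding gradF_def by (simp add: sum_subtractf)
  also have "\<dots> \<le> (\<Sum>i\<in>V. norm (gf i u - gf i v))" by (rule norm_sum)
  also have "\<dots> \<le> (\<Sum>i\<in>V. LL * norm (u - v))" by (rule sum_mono) (rule gf_lip[OF _ u v])
  also have "\<dots> = real I * LL * norm (u - v)" using V_card by simp
  finally show ?thesis .
qed

lemma F_descent_lemma:
  assumes a: "a \<in> K" and b: "b \<in> K"
  shows "F b \<le> F a + gradF a \<bullet> (b - a) + real I * LL * (norm (b - a))\<^sup>2"
proof -
  let ?T = "closed_segment a b"
  have TK: "?T \<subseteq> K" using closed_segment_subset[OF a b K_convex] .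
  have "norm (F b - F a - gradF a \<bullet> (b - a)) \<le> norm (b - a) * (real I * LL * norm (b - a))"
  proof (rule differentiable_bound_linearization[where S = ?T and f' = "\<lambda>x h. gradF x \<bullet> h"])
    show "a + t *\<^sub>R (b - a) \<in> ?T" if "t \<in> {0..1}" for t
    proof -
      have "a + t *\<^sub>R (b - a) = (1 - t) *\<^sub>R a + t *\<^sub>R b" by (simp add: algebra_simps)
      then show ?thesis using that unfolding closed_segment_def by auto
    qed
    show "(F has_derivative (\<lambda>h. gradF x \<bullet> h)) (at x within ?T)" if "x \<in> ?T" for x
      using that TK by (intro F_has_derivative_within) auto
    show "onorm ((\<lambda>h. gradF x \<bullet> h) - (\<lambda>h. gradF a \<bullet> h)) \<le> real I * LL * norm (b - a)" if x: "x \<in> ?T" for x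
    proof -
      have "(\<lambda>h. gradF x \<bullet> h) - (\<lambda>h. gradF a \<bullet> h) = (\<lambda>h. (gradF x - gradF a) \<bullet> h)" by (auto simp: fun_eq_iff inner_diff_left)
      then have "onorm ((\<lambda>h. gradF x \<bullet> h) - (\<lambda>h. gradF a \<bullet> h)) \<le> norm (gradF x - gradF a)" using onorm_inner_le by simp
      also have "\<dots> \<le> real I * LL * norm (x - a)" using gradF_lipschitz x TK a by blast
      also have "\<dots> \<le> real I * LL * norm (b - a)"
        using segment_bound(1)[OF x] LL_nonneg by (intro mult_left_mono) auto
      finally show ?thesis .
    qed
    show "a \<in> ?T" by simp
  qed
  then have "F b - F a - gradF a \<bullet> (b - a) \<le> real I * LL * (norm (b - a))\<^sup>2"
    by (simp add: power2_eq_square algebra_simps)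
  then show ?thesis by simp
qed

lemma F_lipschitz: "u \<in> K \<Longrightarrow> v \<in> K \<Longrightarrow> norm (F u - F v) \<le> LF * norm (u - v)"
proof -
  assume u: "u \<in> K" and v: "v \<in> K"
  show ?thesis
  proof (rule differentiable_bound[OF K_convex _ _ u v, where f' = "\<lambda>x h. gradF x \<bullet> h"])
    show "\<And>x. x \<in> K \<Longrightarrow> (F has_derivative (\<lambda>h. gradF x \<bullet> h)) (at x within K)" by (rule F_has_derivative_within)
    show "onorm (\<lambda>h. gradF x \<bullet> h) \<le> LF" if "x \<in> K" for x
      using onorm_inner_le[of "gradF x"] LFb that unfolding gradF_def by (meson order_trans)
  qed
qed

definition "descent_err n = \<alpha> n * (track_err n * max_gap n) + real I * LL * (\<alpha> n)\<^sup>2 * (max_gap n)\<^sup>2"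
definition "gain n = \<tau>_min / (2 * real I) * (\<Sum>j\<in>V. (gap n j)\<^sup>2)"
definition "U u = F u + G u"

lemma descent_err_nonneg: "descent_err n \<ge> 0"
  unfolding descent_err_def using \<alpha>_pos[of n] track_err_nonneg[of n] max_gap_nonneg[of n] LL_nonneg by simp

lemma gain_nonneg: "gain n \<ge> 0" unfolding gain_def using \<tau>_min_pos by (simp add: sum_nonneg)

lemma F_xbar_Suc_le:
  "F (xbar (Suc n)) \<le> F (xbar n) + \<alpha> n * (gradF (xbar n) \<bullet> avg_dir n) + real I * LL * (\<alpha> n)\<^sup>2 * (max_gap n)\<^sup>2"
proof -
  have step: "F (xbar (Suc n)) \<le> F (xbar n) + gradF (xbar n) \<bullet> (\<alpha> n *\<^sub>R avg_dir n)
      + real I * LL * (norm (\<alpha> n *\<^sub>R avg_dir n))\<^sup>2"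
    using F_descent_lemma[OF xbar_in_K[of n] xbar_in_K[of "Suc n"]] xbar_Suc[of n] by simp
  have "norm (\<alpha> n *\<^sub>R avg_dir n) \<le> \<alpha> n * max_gap n"
    using norm_avg_dir_le[of n] \<alpha>_pos[of n] by (simp add: mult_left_mono)
  then have "(norm (\<alpha> n *\<^sub>R avg_dir n))\<^sup>2 \<le> (\<alpha> n * max_gap n)\<^sup>2" by (intro power_mono) auto
  then have "real I * LL * (norm (\<alpha> n *\<^sub>R avg_dir n))\<^sup>2 \<le> real I * LL * ((\<alpha> n)\<^sup>2 * (max_gap n)\<^sup>2)"
    using LL_nonneg by (intro mult_left_mono) (auto simp: power_mult_distrib)
  then show ?thesis using step by (simp add: mult.assoc)
qed

lemma avg_G_Suc_le: "(1 / real I) * (\<Sum>i\<in>V. G (x (Suc n) i))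
    \<le> (1 / real I) * (\<Sum>j\<in>V. G (x n j)) + \<alpha> n * ((1 / real I) * (\<Sum>j\<in>V. G (xt n j) - G (x n j)))"
proof -
  have "(\<Sum>i\<in>V. G (x (Suc n) i)) \<le> (\<Sum>i\<in>V. (\<Sum>j\<in>V. w n i j * G (z n j)))"
  proof (rule sum_mono)
    fix i assume i: "i \<in> V"
    have "G (x (Suc n) i) = G (\<Sum>j\<in>V. w n i j *\<^sub>R z n j)" using x_upd i by simp
    also have "\<dots> \<le> (\<Sum>j\<in>V. w n i j * G (z n j))"
      using w_nonneg[OF i] w_row[OF i] by (intro convex_on_sum[OF V_fin V_ne Gconv]) auto
    finally show "G (x (Suc n) i) \<le> (\<Sum>j\<in>V. w n i j * G (z n j))" .
  qed
  also have "\<dots> = (\<Sum>j\<in>V. G (z n j))"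
    using w_col by (subst sum.swap) (simp add: sum_distrib_right[symmetric])
  also have "\<dots> \<le> (\<Sum>j\<in>V. (1 - \<alpha> n) * G (x n j) + \<alpha> n * G (xt n j))"
  proof (rule sum_mono)
    fix j assume j: "j \<in> V"
    have "z n j = (1 - \<alpha> n) *\<^sub>R x n j + \<alpha> n *\<^sub>R xt n j" using z_def j by (simp add: algebra_simps)
    then show "G (z n j) \<le> (1 - \<alpha> n) * G (x n j) + \<alpha> n * G (xt n j)"
      using convex_onD[OF Gconv, of "\<alpha> n" "x n j" "xt n j"] \<alpha>_pos[of n] \<alpha>_le1[of n] by simp
  qed
  also have "\<dots> = (\<Sum>j\<in>V. G (x n j)) + \<alpha> n * (\<Sum>j\<in>V. G (xt n j) - G (x n j))"
    by (simp add: algebra_simps sum.distrib sum_subtractf sum_distrib_left)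
  finally have "(\<Sum>i\<in>V. G (x (Suc n) i))
      \<le> (\<Sum>j\<in>V. G (x n j)) + \<alpha> n * (\<Sum>j\<in>V. G (xt n j) - G (x n j))" .
  then have "(1 / real I) * (\<Sum>i\<in>V. G (x (Suc n) i))
      \<le> (1 / real I) * ((\<Sum>j\<in>V. G (x n j)) + \<alpha> n * (\<Sum>j\<in>V. G (xt n j) - G (x n j)))"
    by (rule mult_left_mono) simp
  then show ?thesis by (simp add: algebra_simps)
qed

lemma direction_bound:
  assumes j: "j \<in> V"
  shows "gradF (xbar n) \<bullet> (xt n j - x n j) + G (xt n j) - G (x n j) \<le> track_err n * max_gap n - \<tau>_min / 2 * (gap n j)\<^sup>2"
proof -
  have "(gradF (xbar n) - real I *\<^sub>R y n j) \<bullet> (xt n j - x n j)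
      \<le> norm (gradF (xbar n) - real I *\<^sub>R y n j) * norm (xt n j - x n j)"
    by (rule norm_cauchy_schwarz)
  also have "\<dots> \<le> track_err n * max_gap n"
    using norm_gradF_tracker_le[OF j] gap_le_max_gap[OF j] track_err_nonneg unfolding gap_def
    by (intro mult_mono) auto
  finally have "(gradF (xbar n) - real I *\<^sub>R y n j) \<bullet> (xt n j - x n j) \<le> track_err n * max_gap n" .
  moreover have "\<tau>_min / 2 * (gap n j)\<^sup>2 \<le> \<tau> j / 2 * (gap n j)\<^sup>2"
    using \<tau>_min_le[OF j] by (intro mult_right_mono) auto
  ultimately show ?thesis using G_best_response_decrease[OF j, of n] by (simp add: inner_diff_left)
qed

lemma avg_direction_bound:
  "gradF (xbar n) \<bullet> avg_dir n + (1 / real I) * (\<Sum>j\<in>V. G (xt n j) - G (x n j))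
    \<le> track_err n * max_gap n - gain n"
proof -
  have "real I * (gradF (xbar n) \<bullet> avg_dir n) + (\<Sum>j\<in>V. G (xt n j) - G (x n j))
      = (\<Sum>j\<in>V. gradF (xbar n) \<bullet> (xt n j - x n j) + G (xt n j) - G (x n j))"
    using I_pos unfolding avg_dir_def by (simp add: sum.distrib sum_subtractf inner_sum_right algebra_simps)
  also have "\<dots> \<le> (\<Sum>j\<in>V. track_err n * max_gap n - \<tau>_min / 2 * (gap n j)\<^sup>2)"
    by (rule sum_mono) (rule direction_bound)
  also have "\<dots> = real I * (track_err n * max_gap n) - \<tau>_min / 2 * (\<Sum>j\<in>V. (gap n j)\<^sup>2)"
    using V_card by (simp add: sum_subtractf sum_distrib_left)
  also have "\<dots> = real I * (track_err n * max_gap n - gain n)"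
    using I_pos unfolding gain_def by (simp add: field_simps)
  finally have "real I * (gradF (xbar n) \<bullet> avg_dir n + (1 / real I) * (\<Sum>j\<in>V. G (xt n j) - G (x n j)))
      \<le> real I * (track_err n * max_gap n - gain n)"
    using I_pos by (simp add: distrib_left)
  then show ?thesis by (rule mult_left_le_imp_le) (use I_pos in simp)
qed

lemma \<Phi>_Suc_le: "\<Phi> (Suc n) \<le> \<Phi> n - \<alpha> n * gain n + descent_err n"
proof -
  have "\<Phi> (Suc n) \<le> \<Phi> n + \<alpha> n * (gradF (xbar n) \<bullet> avg_dir n + (1 / real I) * (\<Sum>j\<in>V. G (xt n j) - G (x n j)))
      + real I * LL * (\<alpha> n)\<^sup>2 * (max_gap n)\<^sup>2"
    using F_xbar_Suc_le[of n] avg_G_Suc_le[of n] unfolding \<Phi>_def by (simp add: algebra_simps)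
  also have "\<dots> \<le> \<Phi> n + \<alpha> n * (track_err n * max_gap n - gain n) + real I * LL * (\<alpha> n)\<^sup>2 * (max_gap n)\<^sup>2"
    using avg_direction_bound[of n] \<alpha>_pos[of n] by (simp add: mult_left_mono)
  finally show ?thesis unfolding descent_err_def by (simp add: algebra_simps)
qed

lemma track_err_le_spread_sum: "track_err n \<le> real I * (1 + LL) * Q n"
  unfolding track_err_def Q_def using spread_x_nonneg[of n] spread_y_nonneg[of n] LL_nonneg I_real
  by (simp add: algebra_simps mult_nonneg_nonneg)

lemma summable_descent_err: "summable descent_err"
proof -
  have "summable (\<lambda>n. real I * (1 + LL) * Mbnd * (\<alpha> n * Q n) + real I * LL * Mbnd\<^sup>2 * (\<alpha> n)\<^sup>2)"
    by (intro summable_add summable_mult summable_\<alpha>_Q step(3))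
  then show ?thesis
  proof (rule summable_comparison_test'[where N = 0])
    fix n :: nat assume "n \<ge> 0"
    have a: "\<alpha> n * (track_err n * max_gap n) \<le> \<alpha> n * ((real I * (1 + LL) * Q n) * Mbnd)"
      using track_err_le_spread_sum[of n] max_gap_le_Mbnd[of n] track_err_nonneg[of n] max_gap_nonneg[of n] \<alpha>_pos[of n] Q_nonneg[of n] LL_nonneg
      by (intro mult_left_mono mult_mono) auto
    have b: "real I * LL * (\<alpha> n)\<^sup>2 * (max_gap n)\<^sup>2 \<le> real I * LL * (\<alpha> n)\<^sup>2 * Mbnd\<^sup>2"
      using max_gap_le_Mbnd[of n] max_gap_nonneg[of n] LL_nonneg by (intro mult_left_mono power_mono) auto
    show "norm (descent_err n) \<le> real I * (1 + LL) * Mbnd * (\<alpha> n * Q n) + real I * LL * Mbnd\<^sup>2 * (\<alpha> n)\<^sup>2"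
      using a b descent_err_nonneg[of n] unfolding descent_err_def by (simp add: algebra_simps)
  qed
qed

lemma \<Phi>_telescope: "\<Phi> n + (\<Sum>k<n. \<alpha> k * gain k) \<le> \<Phi> 0 + (\<Sum>k<n. descent_err k)"
proof (induction n)
  case 0 then show ?case by simp
next
  case (Suc n) then show ?case using \<Phi>_Suc_le[of n] by simp
qed

lemma U_xbar_le_\<Phi>: "U (xbar n) \<le> \<Phi> n"
proof -
  have "G (xbar n) = G (\<Sum>i\<in>V. (1 / real I) *\<^sub>R x n i)" unfolding xbar_def by (simp add: scaleR_sum_right)
  also have "\<dots> \<le> (\<Sum>i\<in>V. (1 / real I) * G (x n i))"
    using I_pos V_card by (intro convex_on_sum[OF V_fin V_ne Gconv]) auto
  finally show ?thesis unfolding U_def \<Phi>_def by (simp add: sum_distrib_left)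
qed

lemma U_bounded_below: "\<exists>Ul. \<forall>u\<in>K. Ul \<le> U u"
proof -
  obtain R where R: "\<forall>u\<in>K. norm u \<ge> R \<longrightarrow> U u \<ge> 0"
    using coercive unfolding coercive_on_def U_def F_def by blast
  obtain u0 where u0: "u0 \<in> K" using K_ne by auto
  have "\<forall>u\<in>K. min 0 (U u0 - (LF + LG) * (R + norm u0)) \<le> U u"
  proof
    fix u assume u: "u \<in> K"
    show "min 0 (U u0 - (LF + LG) * (R + norm u0)) \<le> U u"
    proof (cases "norm u \<ge> R")
      case True then have "0 \<le> U u" using R u by blast
      then show ?thesis by (simp add: min.coboundedI1)
    next
      case False
      have f: "F u0 - F u \<le> LF * norm (u - u0)"
        using F_lipschitz[OF u u0] by (simp add: abs_le_iff norm_minus_commute)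
      have g: "G u0 - G u \<le> LG * norm (u - u0)" using G_diff_le[OF u0 u] by (simp add: norm_minus_commute)
      have n: "norm (u - u0) \<le> R + norm u0" using False norm_triangle_ineq4[of u u0] by simp
      have "(LF + LG) * norm (u - u0) \<le> (LF + LG) * (R + norm u0)"
        using n LF_nonneg LG_nonneg by (intro mult_left_mono) auto
      then have "U u0 - (LF + LG) * (R + norm u0) \<le> U u" using f g unfolding U_def by (simp add: algebra_simps)
      then show ?thesis by simp
    qed
  qed
  then show ?thesis by blast
qed

lemma \<Phi>_le: "\<Phi> n \<le> \<Phi> 0 + suminf descent_err"
proof -
  have "(\<Sum>k<n. descent_err k) \<le> suminf descent_err" using summable_descent_err descent_err_nonneg by (intro sum_le_suminf) auto
  moreover have "(\<Sum>k<n. \<alpha> k * gain k) \<ge> 0" using \<alpha>_pos gain_nonneg by (intro sum_nonneg) (simp add: less_imp_le)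
  ultimately show ?thesis using \<Phi>_telescope[of n] by simp
qed

lemma bounded_xbar: "bounded (range xbar)"
proof -
  obtain R where R: "\<forall>u\<in>K. norm u \<ge> R \<longrightarrow> U u \<ge> \<Phi> 0 + suminf descent_err + 1"
    using coercive unfolding coercive_on_def U_def F_def by blast
  have "norm (xbar n) \<le> R" for n
  proof (rule ccontr)
    assume "\<not> norm (xbar n) \<le> R"
    then have "U (xbar n) \<ge> \<Phi> 0 + suminf descent_err + 1" using R xbar_in_K by auto
    then show False using U_xbar_le_\<Phi>[of n] \<Phi>_le[of n] by simp
  qed
  then show ?thesis unfolding bounded_iff by blast
qed

lemma summable_\<alpha>_gain: "summable (\<lambda>n. \<alpha> n * gain n)"
proof -
  obtain Ul where Ul: "\<forall>u\<in>K. Ul \<le> U u" using U_bounded_below by blast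
  show ?thesis
  proof (rule summableI_nonneg_bounded)
    show "\<And>n. 0 \<le> \<alpha> n * gain n" using \<alpha>_pos gain_nonneg by (simp add: less_imp_le)
    fix n
    have "(\<Sum>k<n. descent_err k) \<le> suminf descent_err"
      using summable_descent_err descent_err_nonneg by (intro sum_le_suminf) auto
    moreover have "Ul \<le> \<Phi> n" using Ul xbar_in_K[of n] U_xbar_le_\<Phi>[of n] by fastforce
    ultimately show "(\<Sum>k<n. \<alpha> k * gain k) \<le> \<Phi> 0 + suminf descent_err - Ul" using \<Phi>_telescope[of n] by simp
  qed
qed

lemma summable_\<alpha>_gap1_square: "summable (\<lambda>n. \<alpha> n * (gap n 1)\<^sup>2)"
proof -
  have "summable (\<lambda>n. (2 * real I / \<tau>_min) * (\<alpha> n * gain n))" using summable_\<alpha>_gain by (rule summable_mult)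
  then show ?thesis
  proof (rule summable_comparison_test'[where N = 0])
    fix n :: nat assume "n \<ge> 0"
    have "(gap n 1)\<^sup>2 \<le> (\<Sum>j\<in>V. (gap n j)\<^sup>2)" using one_in_V V_fin by (intro member_le_sum) auto
    then have "(gap n 1)\<^sup>2 \<le> (2 * real I / \<tau>_min) * gain n" using \<tau>_min_pos I_pos unfolding gain_def by (simp add: field_simps)
    then have "\<alpha> n * (gap n 1)\<^sup>2 \<le> \<alpha> n * ((2 * real I / \<tau>_min) * gain n)" using \<alpha>_pos[of n] by (intro mult_left_mono) auto
    then show "norm (\<alpha> n * (gap n 1)\<^sup>2) \<le> (2 * real I / \<tau>_min) * (\<alpha> n * gain n)" using \<alpha>_pos[of n] by (simp add: algebra_simps)
  qed
qed

subsection \<open>The best-response map\<close>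

lemma LS_nonneg: "LS \<ge> 0"
proof -
  obtain u where "u \<in> K" using K_ne by auto
  then show ?thesis using LSLip one_in_V lipschitz_on_nonneg by blast
qed

lemma gft_lipschitz: "j \<in> V \<Longrightarrow> u \<in> K \<Longrightarrow> v1 \<in> K \<Longrightarrow> v2 \<in> K \<Longrightarrow> norm (gft j u v1 - gft j u v2) \<le> LS * norm (v1 - v2)"
  using LSLip lipschitz_on_normD by blast

lemma ft_mixed_diff_le:
  assumes j: "j \<in> V" and v: "v1 \<in> K" "v2 \<in> K" and u: "u1 \<in> K" "u2 \<in> K"
  shows "norm ((ft j u1 v1 - ft j u1 v2) - (ft j u2 v1 - ft j u2 v2)) \<le> LS * norm (v1 - v2) * norm (u1 - u2)"
proof (rule differentiable_bound[OF K_convex _ _ u, where f = "\<lambda>w. ft j w v1 - ft j w v2" and f' = "\<lambda>x h. (gft j x v1 - gft j x v2) \<bullet> h"])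
  show "((\<lambda>w. ft j w v1 - ft j w v2) has_derivative (\<lambda>h. (gft j x v1 - gft j x v2) \<bullet> h)) (at x within K)" if x: "x \<in> K" for x
  proof -
    have "((\<lambda>w. ft j w v1 - ft j w v2) has_derivative (\<lambda>h. gft j x v1 \<bullet> h - gft j x v2 \<bullet> h)) (at x within K)"
      using F_diff j v x by (intro has_derivative_diff) auto
    then show ?thesis by (simp add: inner_diff_left)
  qed
  show "onorm (\<lambda>h. (gft j x v1 - gft j x v2) \<bullet> h) \<le> LS * norm (v1 - v2)" if x: "x \<in> K" for x
    using onorm_inner_le[of "gft j x v1 - gft j x v2"] gft_lipschitz[OF j x v] by linarith
qed

lemma argmin_dist_le:
  assumes j: "j \<in> V" and v: "v1 \<in> K" "v2 \<in> K" and u: "u1 \<in> K" "u2 \<in> K"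
    and o1: "\<forall>w\<in>K. ft j u1 v1 + p1 \<bullet> (u1 - q1) + G u1 \<le> ft j w v1 + p1 \<bullet> (w - q1) + G w"
    and o2: "\<forall>w\<in>K. ft j u2 v2 + p2 \<bullet> (u2 - q2) + G u2 \<le> ft j w v2 + p2 \<bullet> (w - q2) + G w"
  shows "\<tau> j * norm (u1 - u2) \<le> LS * norm (v1 - v2) + norm (p1 - p2)"
proof -
  let ?d = "norm (u1 - u2)"
  have tj: "\<tau> j > 0" using F1 j by blast
  have sc1: "strongly_convex_on K (\<tau> j) (\<lambda>w. ft j w v1 + p1 \<bullet> (w - q1) + G w)"
    using F1 j v by (intro strongly_convex_on_add_affine_convex[OF _ Gconv]) auto
  have sc2: "strongly_convex_on K (\<tau> j) (\<lambda>w. ft j w v2 + p2 \<bullet> (w - q2) + G w)"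
    using F1 j v by (intro strongly_convex_on_add_affine_convex[OF _ Gconv]) auto
  have 1: "(ft j u2 v1 + p1 \<bullet> (u2 - q1) + G u2) - (ft j u1 v1 + p1 \<bullet> (u1 - q1) + G u1) \<ge> \<tau> j / 2 * (norm (u2 - u1))\<^sup>2"
    using strongly_convex_on_minimizer_growth[OF sc1 K_convex u(1) u(2)] o1 by simp
  have 2: "(ft j u1 v2 + p2 \<bullet> (u1 - q2) + G u1) - (ft j u2 v2 + p2 \<bullet> (u2 - q2) + G u2) \<ge> \<tau> j / 2 * (norm (u1 - u2))\<^sup>2"
    using strongly_convex_on_minimizer_growth[OF sc2 K_convex u(2) u(1)] o2 by simp
  have nd: "norm (u2 - u1) = ?d" by (rule norm_minus_commute)
  have "\<tau> j * ?d\<^sup>2 \<le> ((ft j u2 v1 - ft j u2 v2) - (ft j u1 v1 - ft j u1 v2)) + (p1 - p2) \<bullet> (u2 - u1)"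
    using 1 2 nd by (simp add: inner_diff_left inner_diff_right algebra_simps)
  also have "\<dots> \<le> LS * norm (v1 - v2) * ?d + norm (p1 - p2) * ?d"
  proof -
    have "(ft j u2 v1 - ft j u2 v2) - (ft j u1 v1 - ft j u1 v2) \<le> LS * norm (v1 - v2) * norm (u2 - u1)"
      using ft_mixed_diff_le[OF j v u(2) u(1)] by simp
    moreover have "(p1 - p2) \<bullet> (u2 - u1) \<le> norm (p1 - p2) * norm (u2 - u1)" by (rule norm_cauchy_schwarz)
    ultimately show ?thesis using nd by simp
  qed
  finally have A: "\<tau> j * ?d * ?d \<le> (LS * norm (v1 - v2) + norm (p1 - p2)) * ?d"
    by (simp add: power2_eq_square algebra_simps)
  show ?thesis
  proof (cases "?d = 0")
    case True then show ?thesis using LS_nonneg by simp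
  next
    case False then have "?d > 0" by simp
    then show ?thesis using A by (simp add: mult_le_cancel_right_pos)
  qed
qed

lemma G_continuous_on: "continuous_on T G"
  using convex_on_continuous[OF open_UNIV Gconv] continuous_on_subset by blast

lemma argmin_exists:
  assumes j: "j \<in> V" and v: "v \<in> K"
  shows "\<exists>u\<in>K. \<forall>w\<in>K. ft j u v + p \<bullet> (u - q) + G u \<le> ft j w v + p \<bullet> (w - q) + G w"
proof -
  obtain w0 where w0: "w0 \<in> K" using K_ne by auto
  obtain \<xi> where \<xi>: "\<xi> \<in> subdiff G w0" using subdiff_nonempty[OF Gconv] by blast
  have der0: "((\<lambda>w. ft j w v) has_derivative (\<lambda>h. gft j w0 v \<bullet> h)) (at w0 within K)"
    using F_diff j v w0 by blast
  have grow: "ft j w0 v + p \<bullet> (w0 - q) + G w0 + (gft j w0 v + p + \<xi>) \<bullet> (w - w0) + \<tau> j / 2 * (norm (w - w0))\<^sup>2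
      \<le> ft j w v + p \<bullet> (w - q) + G w" if w: "w \<in> K" for w
  proof -
    have "ft j w v \<ge> ft j w0 v + gft j w0 v \<bullet> (w - w0) + \<tau> j / 2 * (norm (w - w0))\<^sup>2"
      using F1 j v by (intro strongly_convex_on_gradient_ineq[OF _ der0 K_convex w0 w]) auto
    moreover have "G w \<ge> G w0 + \<xi> \<bullet> (w - w0)" using \<xi> unfolding subdiff_def by blast
    moreover have "p \<bullet> (w - q) = p \<bullet> (w0 - q) + p \<bullet> (w - w0)" by (simp add: inner_diff_right)
    ultimately show ?thesis by (simp add: inner_add_left)
  qed
  have "continuous_on K (\<lambda>w. ft j w v)"
    unfolding continuous_on_eq_continuous_within
    using F_diff j v by (blast intro: has_derivative_continuous)
  then have "continuous_on K (\<lambda>w. ft j w v + p \<bullet> (w - q) + G w)"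
    by (intro continuous_intros G_continuous_on)
  then show ?thesis
    using quadratic_growth_attains_min[OF K_closed w0 _ _ grow] F1 j by blast
qed

text \<open>\<open>xh v\<close> is the step agent 1 would take from the consensual point \<open>v\<close> if it knew the
  exact gradient \<open>pf v\<close> of the other agents' losses; any agent would do, and \<open>1 \<in> V\<close> since
  \<open>I \<ge> 1\<close>.\<close>

definition "pf v = gradF v - gf 1 v"
definition "xh v = (SOME u. u \<in> K \<and> (\<forall>w\<in>K. ft 1 u v + pf v \<bullet> (u - v) + G u \<le> ft 1 w v + pf v \<bullet> (w - v) + G w))"

lemma xh_argmin: "v \<in> K \<Longrightarrow> xh v \<in> K \<and> (\<forall>w\<in>K. ft 1 (xh v) v + pf v \<bullet> (xh v - v) + G (xh v) \<le> ft 1 w v + pf v \<bullet> (w - v) + G w)"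
proof -
  assume v: "v \<in> K"
  obtain u where u: "u \<in> K" "\<forall>w\<in>K. ft 1 u v + pf v \<bullet> (u - v) + G u \<le> ft 1 w v + pf v \<bullet> (w - v) + G w"
    using argmin_exists[OF one_in_V v, of "pf v" v] by blast
  show ?thesis unfolding xh_def
    by (rule someI[of "\<lambda>u. u \<in> K \<and> (\<forall>w\<in>K. ft 1 u v + pf v \<bullet> (u - v) + G u \<le> ft 1 w v + pf v \<bullet> (w - v) + G w)" u])
       (use u in blast)
qed

lemma \<tau>_1_pos: "\<tau> 1 > 0" using F1 one_in_V by blast

definition "Lh = (LS + (real I + 1) * LL) / \<tau> 1"

lemma pf_lipschitz: "u \<in> K \<Longrightarrow> v \<in> K \<Longrightarrow> norm (pf u - pf v) \<le> (real I + 1) * LL * norm (u - v)"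
proof -
  assume u: "u \<in> K" and v: "v \<in> K"
  have "pf u - pf v = (gradF u - gradF v) - (gf 1 u - gf 1 v)" unfolding pf_def by simp
  then have "norm (pf u - pf v) \<le> norm (gradF u - gradF v) + norm (gf 1 u - gf 1 v)" by (metis norm_triangle_ineq4)
  also have "\<dots> \<le> real I * LL * norm (u - v) + LL * norm (u - v)"
    using gradF_lipschitz[OF u v] gf_lip[OF one_in_V u v] by simp
  finally show ?thesis by (simp add: algebra_simps)
qed

lemma xh_lipschitz: "u \<in> K \<Longrightarrow> v \<in> K \<Longrightarrow> norm (xh u - xh v) \<le> Lh * norm (u - v)"
proof -
  assume u: "u \<in> K" and v: "v \<in> K"
  have "\<tau> 1 * norm (xh u - xh v) \<le> LS * norm (u - v) + norm (pf u - pf v)"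
    using xh_argmin[OF u] xh_argmin[OF v] by (intro argmin_dist_le[OF one_in_V u v]) auto
  also have "\<dots> \<le> (LS + (real I + 1) * LL) * norm (u - v)" using pf_lipschitz[OF u v] by (simp add: algebra_simps)
  finally show ?thesis unfolding Lh_def using \<tau>_1_pos by (simp add: field_simps)
qed

lemma Lh_nonneg: "Lh \<ge> 0" unfolding Lh_def using LS_nonneg LL_nonneg \<tau>_1_pos by simp

definition "Ch = (LS + LL + real I * (1 + LL)) / \<tau> 1"

lemma xt_near_xh_xbar: "norm (xt n 1 - xh (xbar n)) \<le> Ch * Q n"
proof -
  have o1: "\<forall>w\<in>K. ft 1 (xt n 1) (x n 1) + pit n 1 \<bullet> (xt n 1 - x n 1) + G (xt n 1) \<le> ft 1 w (x n 1) + pit n 1 \<bullet> (w - x n 1) + G w"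
    using xt_def one_in_V by blast
  have "\<tau> 1 * norm (xt n 1 - xh (xbar n)) \<le> LS * norm (x n 1 - xbar n) + norm (pit n 1 - pf (xbar n))"
    using xh_argmin[OF xbar_in_K] o1 by (intro argmin_dist_le[OF one_in_V x_in_K[OF one_in_V] xbar_in_K xt_in_K[OF one_in_V]]) auto
  also have "\<dots> \<le> LS * spread_x n + (track_err n + LL * spread_x n)"
  proof -
    have d: "norm (x n 1 - xbar n) \<le> spread_x n"
      using norm_diff_mean_le_spread[OF V_fin _ one_in_V, of "x n"] V_card I_pos unfolding spread_x_def xbar_def by simp
    have "pit n 1 - pf (xbar n) = - (gradF (xbar n) - real I *\<^sub>R y n 1) - (gf 1 (x n 1) - gf 1 (xbar n))"
      using pit_def one_in_V unfolding pf_def by simp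
    then have "norm (pit n 1 - pf (xbar n)) \<le> norm (gradF (xbar n) - real I *\<^sub>R y n 1) + norm (gf 1 (x n 1) - gf 1 (xbar n))"
      by (metis norm_minus_cancel norm_triangle_ineq4)
    also have "\<dots> \<le> track_err n + LL * spread_x n"
    proof -
      have "LL * norm (x n 1 - xbar n) \<le> LL * spread_x n" using d LL_nonneg by (rule mult_left_mono)
      moreover have "norm (gf 1 (x n 1) - gf 1 (xbar n)) \<le> LL * norm (x n 1 - xbar n)"
        by (rule gf_lip[OF one_in_V x_in_K[OF one_in_V, of n] xbar_in_K[of n]])
      ultimately show ?thesis using norm_gradF_tracker_le[OF one_in_V, of n] by linarith
    qed
    finally have e: "norm (pit n 1 - pf (xbar n)) \<le> track_err n + LL * spread_x n" .
    have "LS * norm (x n 1 - xbar n) \<le> LS * spread_x n" using d LS_nonneg by (rule mult_left_mono)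
    then show ?thesis using e by simp
  qed
  also have "\<dots> \<le> (LS + LL + real I * (1 + LL)) * Q n"
  proof -
    have "LL * spread_y n \<ge> 0" "LS * spread_y n \<ge> 0" using spread_y_nonneg[of n] LS_nonneg LL_nonneg by simp_all
    then show ?thesis using track_err_le_spread_sum[of n] unfolding Q_def by (simp add: algebra_simps)
  qed
  finally show ?thesis unfolding Ch_def using \<tau>_1_pos by (simp add: field_simps)
qed

lemma Ch_nonneg: "Ch \<ge> 0" unfolding Ch_def using LS_nonneg LL_nonneg \<tau>_1_pos by simp

definition "res n = norm (xh (xbar n) - xbar n)"

lemma res_le: "res n \<le> (Ch + 1) * Q n + gap n 1"
proof -
  have d: "norm (x n 1 - xbar n) \<le> Q n"
    using norm_diff_mean_le_spread[OF V_fin _ one_in_V, of "x n"] V_card I_pos spread_y_nonneg[of n] unfolding spread_x_def xbar_def Q_def by simp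
  have eq: "xh (xbar n) - xbar n = ((xh (xbar n) - xt n 1) + (xt n 1 - x n 1)) + (x n 1 - xbar n)" by simp
  have "res n \<le> norm ((xh (xbar n) - xt n 1) + (xt n 1 - x n 1)) + norm (x n 1 - xbar n)"
    unfolding res_def eq by (rule norm_triangle_ineq)
  moreover have "norm ((xh (xbar n) - xt n 1) + (xt n 1 - x n 1)) \<le> norm (xh (xbar n) - xt n 1) + norm (xt n 1 - x n 1)"
    by (rule norm_triangle_ineq)
  ultimately have "res n \<le> norm (xh (xbar n) - xt n 1) + norm (xt n 1 - x n 1) + norm (x n 1 - xbar n)" by simp
  then show ?thesis using xt_near_xh_xbar[of n] d unfolding gap_def by (simp add: norm_minus_commute algebra_simps)
qed

definition "Hb = (Ch + 1) * Qmax + Mbnd"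

lemma res_le_Hb: "res n \<le> Hb"
proof -
  have "(Ch + 1) * Q n \<le> (Ch + 1) * Qmax" using Q_le_Qmax Ch_nonneg by (intro mult_left_mono) auto
  moreover have "gap n 1 \<le> Mbnd" using gap_le_max_gap[OF one_in_V, of n] max_gap_le_Mbnd[of n] by simp
  ultimately show ?thesis using res_le[of n] unfolding Hb_def by simp
qed

lemma res_nonneg: "res n \<ge> 0" unfolding res_def by simp

lemma norm_xbar_Suc_diff_le: "norm (xbar (Suc n) - xbar n) \<le> \<alpha> n * Mbnd"
proof -
  have "norm (xbar (Suc n) - xbar n) = \<alpha> n * norm (avg_dir n)" using xbar_Suc[of n] \<alpha>_pos[of n] by simp
  also have "\<dots> \<le> \<alpha> n * Mbnd"
    using norm_avg_dir_le[of n] max_gap_le_Mbnd[of n] \<alpha>_pos[of n] by (intro mult_left_mono) auto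
  finally show ?thesis .
qed

lemma res_Suc_diff_le: "res (Suc n) - res n \<le> (Lh + 1) * Mbnd * \<alpha> n"
proof -
  have "res (Suc n) - res n \<le> norm ((xh (xbar (Suc n)) - xbar (Suc n)) - (xh (xbar n) - xbar n))"
    unfolding res_def by (rule norm_triangle_ineq2)
  also have "\<dots> \<le> norm (xh (xbar (Suc n)) - xh (xbar n)) + norm (xbar (Suc n) - xbar n)"
  proof -
    have "(xh (xbar (Suc n)) - xbar (Suc n)) - (xh (xbar n) - xbar n) = (xh (xbar (Suc n)) - xh (xbar n)) - (xbar (Suc n) - xbar n)"
      by (simp add: algebra_simps)
    then show ?thesis using norm_triangle_ineq4 by metis
  qed
  also have "\<dots> \<le> Lh * norm (xbar (Suc n) - xbar n) + norm (xbar (Suc n) - xbar n)"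
    using xh_lipschitz[OF xbar_in_K xbar_in_K] by simp
  also have "\<dots> = (Lh + 1) * norm (xbar (Suc n) - xbar n)" by (simp add: algebra_simps)
  also have "\<dots> \<le> (Lh + 1) * (\<alpha> n * Mbnd)" using norm_xbar_Suc_diff_le Lh_nonneg by (intro mult_left_mono) auto
  finally show ?thesis by (simp add: algebra_simps)
qed

lemma res_square_Suc_diff_le: "(res (Suc n))\<^sup>2 - (res n)\<^sup>2 \<le> (2 * Hb * (Lh + 1) * Mbnd + 1) * \<alpha> n"
proof -
  have Hb0: "Hb \<ge> 0" using res_le_Hb[of 0] res_nonneg[of 0] by simp
  have "(res (Suc n))\<^sup>2 - (res n)\<^sup>2 = (res (Suc n) - res n) * (res (Suc n) + res n)"
    by (simp add: power2_eq_square algebra_simps)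
  also have "\<dots> \<le> ((Lh + 1) * Mbnd * \<alpha> n) * (2 * Hb)"
  proof (cases "res (Suc n) - res n \<ge> 0")
    case True
    have "res (Suc n) + res n \<le> 2 * Hb" using res_le_Hb[of n] res_le_Hb[of "Suc n"] by simp
    then show ?thesis using True res_Suc_diff_le[of n] res_nonneg[of n] res_nonneg[of "Suc n"]
      by (intro mult_mono) auto
  next
    case False
    then have "(res (Suc n) - res n) * (res (Suc n) + res n) \<le> 0"
      using res_nonneg[of n] res_nonneg[of "Suc n"] by (simp add: mult_nonpos_nonneg)
    moreover have "((Lh + 1) * Mbnd * \<alpha> n) * (2 * Hb) \<ge> 0"
      using Lh_nonneg Mbnd_nonneg \<alpha>_pos[of n] Hb0 by simp
    ultimately show ?thesis by linarith
  qed
  also have "\<dots> \<le> (2 * Hb * (Lh + 1) * Mbnd + 1) * \<alpha> n" using \<alpha>_pos[of n] by (simp add: algebra_simps)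
  finally show ?thesis .
qed

lemma summable_\<alpha>_res_square: "summable (\<lambda>n. \<alpha> n * (res n)\<^sup>2)"
proof -
  have "summable (\<lambda>n. 2 * (Ch + 1)\<^sup>2 * Qmax * (\<alpha> n * Q n) + 2 * (\<alpha> n * (gap n 1)\<^sup>2))"
    by (intro summable_add summable_mult summable_\<alpha>_Q summable_\<alpha>_gap1_square)
  then show ?thesis
  proof (rule summable_comparison_test'[where N = 0])
    fix n :: nat
    have "(res n)\<^sup>2 \<le> ((Ch + 1) * Q n + gap n 1)\<^sup>2" using res_le[of n] res_nonneg[of n] by (intro power_mono) auto
    also have "\<dots> \<le> 2 * ((Ch + 1) * Q n)\<^sup>2 + 2 * (gap n 1)\<^sup>2"
      using zero_le_power2[of "(Ch + 1) * Q n - gap n 1"] by (simp add: power2_eq_square algebra_simps)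
    also have "((Ch + 1) * Q n)\<^sup>2 \<le> (Ch + 1)\<^sup>2 * Qmax * Q n"
    proof -
      have "(Q n)\<^sup>2 \<le> Qmax * Q n" using Q_le_Qmax[of n] Q_nonneg[of n] by (simp add: power2_eq_square mult_right_mono)
      then show ?thesis using Ch_nonneg by (simp add: power_mult_distrib mult.assoc mult_left_mono)
    qed
    finally have "(res n)\<^sup>2 \<le> 2 * ((Ch + 1)\<^sup>2 * Qmax * Q n) + 2 * (gap n 1)\<^sup>2" by simp
    then have "\<alpha> n * (res n)\<^sup>2 \<le> \<alpha> n * (2 * ((Ch + 1)\<^sup>2 * Qmax * Q n) + 2 * (gap n 1)\<^sup>2)"
      using \<alpha>_pos[of n] by (intro mult_left_mono) auto
    then show "norm (\<alpha> n * (res n)\<^sup>2) \<le> 2 * (Ch + 1)\<^sup>2 * Qmax * (\<alpha> n * Q n) + 2 * (\<alpha> n * (gap n 1)\<^sup>2)"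
      using \<alpha>_pos[of n] by (simp add: algebra_simps)
  qed
qed

lemma res_tendsto_0: "res \<longlonglongrightarrow> 0"
proof -
  have "0 \<le> 2 * Hb * (Lh + 1) * Mbnd"
    using res_le_Hb[of 0] res_nonneg[of 0] Lh_nonneg Mbnd_nonneg by simp
  then have "0 < 2 * Hb * (Lh + 1) * Mbnd + 1" by linarith
  then have "(\<lambda>n. (res n)\<^sup>2) \<longlonglongrightarrow> 0"
    using \<alpha>_pos by (intro tendsto_zero_of_weighted_summable[OF _ _ _ res_square_Suc_diff_le
        \<alpha>_tendsto_0 summable_\<alpha>_res_square step(2)]) (auto simp: less_imp_le)
  then show ?thesis by (rule LIMSEQ_zero_of_square)
qed

lemma xh_fixed_point_stationary:
  assumes vK: "v \<in> K" and fixed: "xh v = v"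
  shows "stationary K (\<lambda>u. \<Sum>i\<in>{1..I}. gf i u) G v"
proof -
  have opt: "\<forall>w\<in>K. ft 1 v v + pf v \<bullet> (v - v) + G v \<le> ft 1 w v + pf v \<bullet> (w - v) + G w"
    using xh_argmin[OF vK] fixed by simp
  have "((\<lambda>w. ft 1 w v) has_derivative (\<lambda>h. gft 1 v v \<bullet> h)) (at v within K)"
    using F_diff one_in_V vK by blast
  then have der: "((\<lambda>w. ft 1 w v + pf v \<bullet> (w - v)) has_derivative (\<lambda>h. (gft 1 v v + pf v) \<bullet> h)) (at v within K)"
    by (auto intro!: derivative_eq_intros simp: inner_add_left)
  have "\<forall>w\<in>K. G v \<le> G w + (gft 1 v v + pf v) \<bullet> (w - v)"
    by (rule linearized_optimality_at_minimizer[OF der K_convex vK Gconv]) (use opt in \<open>simp add: algebra_simps\<close>)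
  moreover have "gft 1 v v + pf v = gradF v" using F2 one_in_V vK unfolding pf_def by simp
  ultimately obtain \<xi> where "\<xi> \<in> subdiff G v" "\<forall>w\<in>K. (gradF v + \<xi>) \<bullet> (w - v) \<ge> 0"
    using subgradient_optimality_condition[OF Gconv K_convex vK, of "gradF v"] by auto
  then show ?thesis unfolding stationary_def using vK unfolding gradF_def by blast
qed

lemma xbar_eq: "(\<lambda>n. (1 / real I) *\<^sub>R (\<Sum>i\<in>{1..I}. x n i)) = xbar"
  by (simp add: xbar_def fun_eq_iff)

lemma bounded_average: "bounded (range (\<lambda>n. (1 / real I) *\<^sub>R (\<Sum>i\<in>{1..I}. x n i)))"
  unfolding xbar_eq by (rule bounded_xbar)

text \<open>Along the subsequence the residual vanishes, so the limit is a fixed point of the continuous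
  map \<open>xh\<close>.\<close>

lemma average_limit_point_stationary:
  assumes r: "strict_mono r" and lim: "((\<lambda>k. (1 / real I) *\<^sub>R (\<Sum>i\<in>{1..I}. x (r k) i)) \<longlongrightarrow> xs) sequentially"
  shows "stationary K (\<lambda>u. \<Sum>i\<in>{1..I}. gf i u) G xs"
proof -
  have lim': "(\<lambda>k. xbar (r k)) \<longlonglongrightarrow> xs" using lim unfolding xbar_def by simp
  have xsK: "xs \<in> K" using closed_sequentially[OF K_closed _ lim'] xbar_in_K by auto
  have "(\<lambda>k. xh (xbar (r k)) - xbar (r k)) \<longlonglongrightarrow> 0"
    using LIMSEQ_subseq_LIMSEQ[OF res_tendsto_0 r] unfolding res_def comp_def by (simp add: tendsto_norm_zero_iff)
  then have "(\<lambda>k. (xh (xbar (r k)) - xbar (r k)) + xbar (r k)) \<longlonglongrightarrow> 0 + xs"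
    using lim' by (rule tendsto_add)
  then have L1: "(\<lambda>k. xh (xbar (r k))) \<longlonglongrightarrow> xs" by simp
  have "continuous_on K xh"
    using xh_lipschitz Lh_nonneg by (intro lipschitz_on_continuous_on[of Lh]) (auto intro: lipschitz_onI simp: dist_norm)
  then have L2: "(\<lambda>k. xh (xbar (r k))) \<longlonglongrightarrow> xh xs"
    using xsK lim' xbar_in_K by (auto simp: continuous_on_sequentially comp_def)
  show ?thesis using xh_fixed_point_stationary[OF xsK LIMSEQ_unique[OF L2 L1]] .
qed

lemma local_copies_consensus:
  "\<forall>i\<in>{1..I}. ((\<lambda>n. norm (x n i - (1 / real I) *\<^sub>R (\<Sum>j\<in>{1..I}. x n j))) \<longlongrightarrow> 0) sequentially"
proof
  fix i assume i: "i \<in> {1..I}"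
  show "((\<lambda>n. norm (x n i - (1 / real I) *\<^sub>R (\<Sum>j\<in>{1..I}. x n j))) \<longlongrightarrow> 0) sequentially"
  proof (rule tendsto_sandwich[where f = "\<lambda>n. 0" and h = spread_x])
    show "\<forall>\<^sub>F n in sequentially. norm (x n i - (1 / real I) *\<^sub>R (\<Sum>j\<in>{1..I}. x n j)) \<le> spread_x n"
      using norm_diff_mean_le_spread[OF V_fin _ i] V_card I_pos unfolding spread_x_def
      by (intro always_eventually allI) simp
  qed (auto simp: spread_x_tendsto_0)
qed

end

theorem theorem1:
  fixes K :: "'a::euclidean_space set"
    and I :: nat
    and f :: "nat \<Rightarrow> 'a \<Rightarrow> real" and gf :: "nat \<Rightarrow> 'a \<Rightarrow> 'a"
    and G :: "'a \<Rightarrow> real"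
    and E :: "nat \<Rightarrow> (nat \<times> nat) set" and \<theta> :: "nat \<Rightarrow> nat \<Rightarrow> real" and \<theta>\<^sub>0 :: real
    and B :: nat
    and ft :: "nat \<Rightarrow> 'a \<Rightarrow> 'a \<Rightarrow> real" and gft :: "nat \<Rightarrow> 'a \<Rightarrow> 'a \<Rightarrow> 'a"
    and \<tau> :: "nat \<Rightarrow> real"
    and \<alpha> :: "nat \<Rightarrow> real"
    and x xt z y pit :: "nat \<Rightarrow> nat \<Rightarrow> 'a"
  assumes I_pos: "I \<ge> 1"
    \<comment> \<open>(A1)\<close>
    and A1: "K \<noteq> {}" "closed K" "convex K"
    \<comment> \<open>(A2): each f_i is C^1 on an open set containing K, with gradient gf i\<close>
    and A2: "\<exists>S. open S \<and> K \<subseteq> S \<and> (\<forall>i\<in>{1..I}.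
               (\<forall>u\<in>S. (f i has_derivative (\<lambda>h. gf i u \<bullet> h)) (at u)) \<and> continuous_on S (gf i))"
    \<comment> \<open>(A3)\<close>
    and A3: "\<forall>i\<in>{1..I}. \<exists>L. lipschitz_on L K (gf i)"
    \<comment> \<open>(A4)\<close>
    and A4: "\<exists>LF. \<forall>u\<in>K. norm (\<Sum>i\<in>{1..I}. gf i u) \<le> LF"
    \<comment> \<open>(A5)\<close>
    and A5: "convex_on UNIV G" "\<exists>LG. \<forall>u\<in>K. \<forall>\<xi>\<in>subdiff G u. norm \<xi> \<le> LG"
    \<comment> \<open>(A6)\<close>
    and A6: "coercive_on K (\<lambda>u. (\<Sum>i\<in>{1..I}. f i u) + G u)"
    \<comment> \<open>network: digraphs on vertex set {1..I}, weights\<close>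
    and E_sub: "\<forall>n. E n \<subseteq> {1..I} \<times> {1..I}"
    and vt_range: "0 < \<theta>\<^sub>0" "\<theta>\<^sub>0 < 1"
    and theta_range: "\<forall>i\<in>{1..I}. \<forall>j\<in>{1..I}. \<theta>\<^sub>0 \<le> \<theta> i j \<and> \<theta> i j \<le> 1"
    \<comment> \<open>(B1)\<close>
    and B1: "B > 0" "\<forall>k. strongly_connected_dg {1..I} (\<Union>n\<in>{k*B..<(k+1)*B}. E n)"
    \<comment> \<open>(B2)\<close>
    and B2: "\<forall>n. \<forall>i\<in>{1..I}. (\<Sum>j\<in>{1..I}. weight E \<theta> n i j) = 1"
            "\<forall>n. \<forall>j\<in>{1..I}. (\<Sum>i\<in>{1..I}. weight E \<theta> n i j) = 1"
    \<comment> \<open>surrogates: gradient in the first argument\<close>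
    and F_diff: "\<forall>i\<in>{1..I}. \<forall>v\<in>K. \<forall>u\<in>K.
               ((\<lambda>w. ft i w v) has_derivative (\<lambda>h. gft i u v \<bullet> h)) (at u within K)"
    \<comment> \<open>(F1)\<close>
    and F1: "\<forall>i\<in>{1..I}. \<tau> i > 0 \<and> (\<forall>v\<in>K. strongly_convex_on K (\<tau> i) (\<lambda>w. ft i w v))"
    \<comment> \<open>(F2)\<close>
    and F2: "\<forall>i\<in>{1..I}. \<forall>u\<in>K. gft i u u = gf i u"
    \<comment> \<open>(F3)\<close>
    and F3: "\<forall>i\<in>{1..I}. \<exists>L. \<forall>u\<in>K. lipschitz_on L K (\<lambda>v. gft i u v)"
    \<comment> \<open>step sizes\<close>
    and step: "\<forall>n. 0 < \<alpha> n \<and> \<alpha> n \<le> 1" "\<not> summable \<alpha>" "summable (\<lambda>n. (\<alpha> n)\<^sup>2)"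
    \<comment> \<open>exact NEXT iteration\<close>
    and init: "\<forall>i\<in>{1..I}. x 0 i \<in> K \<and> y 0 i = gf i (x 0 i)"
    and pit_def: "\<forall>n. \<forall>i\<in>{1..I}. pit n i = real I *\<^sub>R y n i - gf i (x n i)"
    and xt_def: "\<forall>n. \<forall>i\<in>{1..I}. xt n i \<in> K \<and>
               (\<forall>w\<in>K. ft i (xt n i) (x n i) + pit n i \<bullet> (xt n i - x n i) + G (xt n i)
                       \<le> ft i w (x n i) + pit n i \<bullet> (w - x n i) + G w)"
    and z_def: "\<forall>n. \<forall>i\<in>{1..I}. z n i = x n i + \<alpha> n *\<^sub>R (xt n i - x n i)"
    and x_upd: "\<forall>n. \<forall>i\<in>{1..I}. x (Suc n) i = (\<Sum>j\<in>{1..I}. weight E \<theta> n i j *\<^sub>R z n j)"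
    and y_upd: "\<forall>n. \<forall>i\<in>{1..I}. y (Suc n) i =
               (\<Sum>j\<in>{1..I}. weight E \<theta> n i j *\<^sub>R y n j) + gf i (x (Suc n) i) - gf i (x n i)"
  shows "bounded (range (\<lambda>n. (1 / real I) *\<^sub>R (\<Sum>i\<in>{1..I}. x n i)))
       \<and> (\<forall>xs r. strict_mono r \<and>
             ((\<lambda>k. (1 / real I) *\<^sub>R (\<Sum>i\<in>{1..I}. x (r k) i)) \<longlongrightarrow> xs) sequentially
             \<longrightarrow> stationary K (\<lambda>u. \<Sum>i\<in>{1..I}. gf i u) G xs)
       \<and> (\<forall>i\<in>{1..I}. ((\<lambda>n. norm (x n i - (1 / real I) *\<^sub>R (\<Sum>j\<in>{1..I}. x n j))) \<longlongrightarrow> 0) sequentially)"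
proof -
  obtain S where S: "open S" "K \<subseteq> S"
    and fder: "\<forall>i\<in>{1..I}. \<forall>u\<in>S. (f i has_derivative (\<lambda>h. gf i u \<bullet> h)) (at u)"
    using A2 by blast
  obtain LL where LL: "\<forall>i\<in>{1..I}. LL-lipschitz_on K (gf i)"
    using uniform_lipschitz_bound[of "{1..I}" "UNIV :: unit set" K "\<lambda>i _. gf i"] A3 by auto
  obtain LS where LS: "\<forall>i\<in>{1..I}. \<forall>u\<in>K. LS-lipschitz_on K (gft i u)"
    using uniform_lipschitz_bound[OF _ F3] by auto
  obtain LF where LF: "\<forall>u\<in>K. norm (\<Sum>i\<in>{1..I}. gf i u) \<le> LF" using A4 by blast
  obtain LG where LG: "\<forall>u\<in>K. \<forall>\<xi>\<in>subdiff G u. norm \<xi> \<le> LG" using A5(2) by blast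
  interpret next_iteration I E \<theta> \<theta>\<^sub>0 B K f gf G ft gft \<tau> \<alpha> x xt z y pit LL LS LF LG S
    by unfold_locales (fact I_pos E_sub vt_range theta_range B1 B2 A1 S fder LL LF A5(1) LG A6 F_diff F1 F2 LS
        step init pit_def xt_def z_def x_upd y_upd)+
  show ?thesis using bounded_average average_limit_point_stationary local_copies_consensus by blast
qed

end
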